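(* Let $P=P_1\otimes\cdots\otimes P_n$ and $Q=Q_1\otimes\cdots\otimes Q_n$ be product distributions on $[q]^n$ with $P\neq Q$, and let $\mathcal C$ be a coordinate-wise greedy coupling of $P$ and $Q$. Then one can draw an exact sample from the distribution $\pi$ on $[q]^n$ defined by $\pi(\omega)=\Pr_{(X,Y)\sim\mathcal C}[X=\omega\mid X\neq Y]$ in $O(n)$ time (the hidden constant being linear in $q$).
   Context: $d_{TV}(P,Q)=\frac12\sum_{\omega}|P(\omega)-Q(\omega)|$. A coordinate-wise greedy coupling $\mathcal C$ of $P$ and $Q$ is a distribution on pairs $(X,Y)\in[q]^n\times[q]^n$ of the form $\mathcal C=\mathcal C_1\otimes\cdots\otimes\mathcal C_n$ (coordinates $(X_i,Y_i)$ mutually independent), where each $\mathcal C_i$ is a coupling of $P_i$ and $Q_i$ satisfying $\Pr_{\mathcal C_i}[X_i=Y_i=c]=\min\{P_i(c),Q_i(c)\}$ for every $c\in[q]$. Since $P\ne Q$, $\Pr_{\mathcal C}[X\neq Y]>0$, so $\pi$ is well defined (and depends only on $P$ and $Q$). Inputs are the marginals $P_i(c),Q_i(c)$; arithmetic operations cost $O(1)$ time. *)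

theory Defs
  imports "HOL-Probability.Probability"
begin

text \<open>[q] = {0..<q}. A product distribution P = P_1 x ... x P_n is given by its marginals
  P i c (i < n, c < q). Points of [q]^n are lists of length n with entries < q.\<close>

definition cube :: "nat \<Rightarrow> nat \<Rightarrow> nat list set" where
  "cube n q = {w. length w = n \<and> (\<forall>i<n. w ! i < q)}"

definition is_dist :: "nat \<Rightarrow> (nat \<Rightarrow> real) \<Rightarrow> bool" where
  "is_dist q p \<longleftrightarrow> (\<forall>c<q. 0 \<le> p c) \<and> (\<Sum>c<q. p c) = 1"

definition is_product_dist :: "nat \<Rightarrow> nat \<Rightarrow> (nat \<Rightarrow> nat \<Rightarrow> real) \<Rightarrow> bool" where
  "is_product_dist n q P \<longleftrightarrow> (\<forall>i<n. is_dist q (P i))"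

definition prod_mass :: "nat \<Rightarrow> (nat \<Rightarrow> nat \<Rightarrow> real) \<Rightarrow> nat list \<Rightarrow> real" where
  "prod_mass n P w = (\<Prod>i<n. P i (w ! i))"

text \<open>Cpl i a b = Pr[(X_i, Y_i) = (a, b)]. The coupling of P and Q is the product of the Cpl i.\<close>

definition is_greedy_coupling_coord ::
    "nat \<Rightarrow> (nat \<Rightarrow> real) \<Rightarrow> (nat \<Rightarrow> real) \<Rightarrow> (nat \<Rightarrow> nat \<Rightarrow> real) \<Rightarrow> bool" where
  "is_greedy_coupling_coord q p r C \<longleftrightarrow>
     (\<forall>a<q. \<forall>b<q. 0 \<le> C a b) \<and>
     (\<forall>a<q. (\<Sum>b<q. C a b) = p a) \<and>
     (\<forall>b<q. (\<Sum>a<q. C a b) = r b) \<and>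
     (\<forall>c<q. C c c = min (p c) (r c))"

definition is_greedy_coupling ::
    "nat \<Rightarrow> nat \<Rightarrow> (nat \<Rightarrow> nat \<Rightarrow> real) \<Rightarrow> (nat \<Rightarrow> nat \<Rightarrow> real)
       \<Rightarrow> (nat \<Rightarrow> nat \<Rightarrow> nat \<Rightarrow> real) \<Rightarrow> bool" where
  "is_greedy_coupling n q P Q Cpl \<longleftrightarrow> (\<forall>i<n. is_greedy_coupling_coord q (P i) (Q i) (Cpl i))"

definition coupling_mass :: "nat \<Rightarrow> (nat \<Rightarrow> nat \<Rightarrow> nat \<Rightarrow> real) \<Rightarrow> nat list \<Rightarrow> nat list \<Rightarrow> real" where
  "coupling_mass n Cpl w v = (\<Prod>i<n. Cpl i (w ! i) (v ! i))"

definition joint_neq :: "nat \<Rightarrow> nat \<Rightarrow> (nat \<Rightarrow> nat \<Rightarrow> nat \<Rightarrow> real) \<Rightarrow> nat list \<Rightarrow> real" where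
  "joint_neq n q Cpl w = (\<Sum>v\<in>cube n q - {w}. coupling_mass n Cpl w v)"

definition pi_cond :: "nat \<Rightarrow> nat \<Rightarrow> (nat \<Rightarrow> nat \<Rightarrow> nat \<Rightarrow> real) \<Rightarrow> nat list \<Rightarrow> real" where
  "pi_cond n q Cpl w = joint_neq n q Cpl w / (\<Sum>u\<in>cube n q. joint_neq n q Cpl u)"

text \<open>Each instruction costs one time step.\<close>

datatype aop = Plus | Minus | Times | Divide

datatype instr =
    Const nat int
  | Arith aop nat nat nat
  | Load nat nat
  | Store nat nat
  | JmpLe nat nat nat
  | Flip nat nat
  | Halt

type_synonym config = "nat \<times> (nat \<Rightarrow> real)"

fun eval_aop :: "aop \<Rightarrow> real \<Rightarrow> real \<Rightarrow> real" where
  "eval_aop Plus x y = x + y"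
| "eval_aop Minus x y = x - y"
| "eval_aop Times x y = x * y"
| "eval_aop Divide x y = x / y"

definition halted :: "instr list \<Rightarrow> config \<Rightarrow> bool" where
  "halted prog s \<longleftrightarrow> fst s \<ge> length prog \<or> prog ! fst s = Halt"

definition step :: "instr list \<Rightarrow> config \<Rightarrow> config pmf" where
  "step prog s = (case s of (pc, m) \<Rightarrow>
     if halted prog s then return_pmf s else
     (case prog ! pc of
        Const r k \<Rightarrow> return_pmf (Suc pc, m(r := of_int k))
      | Arith f r a b \<Rightarrow> return_pmf (Suc pc, m(r := eval_aop f (m a) (m b)))
      | Load r a \<Rightarrow> return_pmf (Suc pc, m(r := m (nat \<lfloor>m a\<rfloor>)))
      | Store a r \<Rightarrow> return_pmf (Suc pc, m(nat \<lfloor>m a\<rfloor> := m r))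
      | JmpLe a b t \<Rightarrow> return_pmf (if m a \<le> m b then t else Suc pc, m)
      | Flip r a \<Rightarrow> map_pmf (\<lambda>bit. (Suc pc, m(r := (if bit then 1 else 0))))
                       (bernoulli_pmf (max 0 (min 1 (m a))))
      | Halt \<Rightarrow> return_pmf s))"

fun exec :: "instr list \<Rightarrow> nat \<Rightarrow> config \<Rightarrow> config pmf" where
  "exec prog 0 s = return_pmf s"
| "exec prog (Suc k) s = bind_pmf (exec prog k s) (step prog)"

definition input_mem :: "nat \<Rightarrow> nat \<Rightarrow> (nat \<Rightarrow> nat \<Rightarrow> real) \<Rightarrow> (nat \<Rightarrow> nat \<Rightarrow> real) \<Rightarrow> nat \<Rightarrow> real" where
  "input_mem n q P Q j =
     (if j = 0 then real n
      else if j = 1 then real q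
      else if 2 \<le> j \<and> j < 2 + n * q then P ((j - 2) div q) ((j - 2) mod q)
      else if 2 + n * q \<le> j \<and> j < 2 + 2 * n * q then Q ((j - 2 - n * q) div q) ((j - 2 - n * q) mod q)
      else 0)"

definition outputs :: "instr list \<Rightarrow> nat \<Rightarrow> nat list \<Rightarrow> config set" where
  "outputs prog n w = {s. halted prog s \<and> (\<forall>i<n. snd s i = real (w ! i))}"

end

theory Submission
  imports Defs
begin

text \<open>Write \<open>T\<^sub>i = \<Prod>\<^sub>j\<^sub>\<ge>\<^sub>i \<Sum>\<^sub>c min (P\<^sub>j c) (Q\<^sub>j c)\<close> for the probability that the greedy
  coupling agrees on all coordinates \<open>\<ge> i\<close>. For a greedy coupling,
  \<open>Pr[X = w, X \<noteq> Y] = \<Prod>\<^sub>i P\<^sub>i(w\<^sub>i) - \<Prod>\<^sub>i min (P\<^sub>i(w\<^sub>i)) (Q\<^sub>i(w\<^sub>i))\<close>, so \<open>\<pi>\<close> can be sampled one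
  coordinate at a time, carrying a flag \<open>F\<close> recording whether \<open>X\<close> and \<open>Y\<close> have agreed so far.
  With \<open>F = 1\<close>, coordinate \<open>i\<close> receives the value \<open>c\<close> with weight \<open>(1 - T\<^sub>i\<^sub>+\<^sub>1) min (P\<^sub>i c) (Q\<^sub>i c)\<close>
  (agree now, disagree later; \<open>F\<close> stays 1) or \<open>P\<^sub>i c - min (P\<^sub>i c) (Q\<^sub>i c)\<close> (disagree now; \<open>F\<close>
  becomes 0), normalised by \<open>1 - T\<^sub>i\<close>; with \<open>F = 0\<close> the same formulas give \<open>P\<^sub>i\<close>. The categorical
  choice among the \<open>2q\<close> weights is made by sequential biased coins, each accepting its
  candidate with probability weight / remaining mass. By induction over the coordinates,
  the probability that the output equals \<open>w\<close> from a state \<open>(i, F)\<close> whose prefix agrees with \<open>w\<close>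
  is \<open>(\<Prod>\<^sub>j\<^sub>\<ge>\<^sub>i P\<^sub>j(w\<^sub>j) - F \<Prod>\<^sub>j\<^sub>\<ge>\<^sub>i min (P\<^sub>j(w\<^sub>j)) (Q\<^sub>j(w\<^sub>j))) / (1 - F T\<^sub>i)\<close>, which at
  \<open>(0, 1)\<close> is \<open>\<pi>(w)\<close>; \<open>P \<noteq> Q\<close> gives \<open>T\<^sub>0 < 1\<close>. Precomputing all \<open>T\<^sub>i\<close> takes \<open>O(nq)\<close>
  steps, and so does the sampling.\<close>

section \<open>Greedy couplings of product distributions\<close>

lemma cube_Suc: "cube (Suc n) q = (\<lambda>(c, v). c # v) ` ({..<q} \<times> cube n q)"
proof (rule set_eqI)
  fix w show "w \<in> cube (Suc n) q \<longleftrightarrow> w \<in> (\<lambda>(c, v). c # v) ` ({..<q} \<times> cube n q)"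
  proof
    assume "w \<in> cube (Suc n) q"
    then obtain c v where w: "w = c # v" and l: "length v = n" and h: "\<forall>i<Suc n. w ! i < q"
      unfolding cube_def by (cases w) auto
    have "c < q" "\<forall>i<n. v ! i < q" using h w by auto
    then show "w \<in> (\<lambda>(c, v). c # v) ` ({..<q} \<times> cube n q)"
      using w l unfolding cube_def by force
  qed (auto simp: cube_def less_Suc_eq_0_disj)
qed

lemma finite_cube: "finite (cube n q)"
proof -
  have "cube n q \<subseteq> {xs. set xs \<subseteq> {..<q} \<and> length xs = n}"
    unfolding cube_def by (auto simp: in_set_conv_nth)
  then show ?thesis by (rule finite_subset) (simp add: finite_lists_length_eq)
qed

lemma sum_cube_prod:
  "(\<Sum>v\<in>cube n q. \<Prod>i<n. f i (v ! i)) = (\<Prod>i<n. \<Sum>c<q. (f i c :: 'a :: comm_semiring_1))"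
proof (induction n arbitrary: f)
  case 0
  have "cube 0 q = {[]}" unfolding cube_def by auto
  then show ?case by simp
next
  case (Suc n)
  have inj: "inj_on (\<lambda>(c, v). c # v) ({..<q} \<times> cube n q)" by (auto simp: inj_on_def)
  have "(\<Sum>v\<in>cube (Suc n) q. \<Prod>i<Suc n. f i (v ! i))
      = (\<Sum>c<q. \<Sum>v\<in>cube n q. f 0 c * (\<Prod>i<n. f (Suc i) (v ! i)))"
    unfolding cube_Suc sum.reindex[OF inj] sum.cartesian_product
    by (rule sum.cong) (auto simp del: prod.lessThan_Suc simp add: prod.lessThan_Suc_shift)
  also have "\<dots> = (\<Sum>c<q. f 0 c) * (\<Prod>i<n. \<Sum>c<q. f (Suc i) c)"
    using Suc.IH[of "\<lambda>i. f (Suc i)"] by (simp add: sum_distrib_left[symmetric] sum_distrib_right)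
  also have "\<dots> = (\<Prod>i<Suc n. \<Sum>c<q. f i c)"
    by (simp del: prod.lessThan_Suc add: prod.lessThan_Suc_shift)
  finally show ?case .
qed

lemma joint_neq_greedy:
  assumes "is_greedy_coupling n q P Q Cpl" and "w \<in> cube n q"
  shows "joint_neq n q Cpl w = (\<Prod>i<n. P i (w ! i)) - (\<Prod>i<n. min (P i (w ! i)) (Q i (w ! i)))"
proof -
  have coord: "\<forall>i<n. w ! i < q \<and> is_greedy_coupling_coord q (P i) (Q i) (Cpl i)"
    using assms unfolding cube_def is_greedy_coupling_def by auto
  have "joint_neq n q Cpl w = (\<Sum>v\<in>cube n q. coupling_mass n Cpl w v) - coupling_mass n Cpl w w"
    unfolding joint_neq_def using assms(2) finite_cube by (simp add: sum_diff1)
  also have "(\<Sum>v\<in>cube n q. coupling_mass n Cpl w v) = (\<Prod>i<n. \<Sum>c<q. Cpl i (w ! i) c)"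
    unfolding coupling_mass_def by (rule sum_cube_prod)
  also have "\<dots> = (\<Prod>i<n. P i (w ! i))"
    using coord unfolding is_greedy_coupling_coord_def by (intro prod.cong) auto
  also have "coupling_mass n Cpl w w = (\<Prod>i<n. min (P i (w ! i)) (Q i (w ! i)))"
    using coord unfolding coupling_mass_def is_greedy_coupling_coord_def by (intro prod.cong) auto
  finally show ?thesis .
qed

lemma pi_cond_greedy:
  assumes g: "is_greedy_coupling n q P Q Cpl" and "is_product_dist n q P" and w: "w \<in> cube n q"
  shows "pi_cond n q Cpl w = ((\<Prod>i<n. P i (w ! i)) - (\<Prod>i<n. min (P i (w ! i)) (Q i (w ! i))))
            / (1 - (\<Prod>i<n. \<Sum>c<q. min (P i c) (Q i c)))"
proof -
  have "(\<Sum>u\<in>cube n q. joint_neq n q Cpl u)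
      = (\<Sum>u\<in>cube n q. (\<Prod>i<n. P i (u ! i)) - (\<Prod>i<n. min (P i (u ! i)) (Q i (u ! i))))"
    by (rule sum.cong) (auto simp: joint_neq_greedy[OF g])
  also have "\<dots> = (\<Prod>i<n. \<Sum>c<q. P i c) - (\<Prod>i<n. \<Sum>c<q. min (P i c) (Q i c))"
    by (simp add: sum_subtractf sum_cube_prod[where f = P]
        sum_cube_prod[where f = "\<lambda>i c. min (P i c) (Q i c)"])
  also have "(\<Prod>i<n. \<Sum>c<q. P i c) = 1"
    using assms(2) unfolding is_product_dist_def is_dist_def by (intro prod.neutral) auto
  finally show ?thesis unfolding pi_cond_def joint_neq_greedy[OF g w] by simp
qed

lemma sum_min_le_1: "is_dist q p \<Longrightarrow> (\<Sum>c<q. min (p c) (r c)) \<le> 1"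
  unfolding is_dist_def using sum_mono[of "{..<q}" "\<lambda>c. min (p c) (r c)" p] by auto

lemma sum_min_nonneg: "is_dist q p \<Longrightarrow> is_dist q r \<Longrightarrow> 0 \<le> (\<Sum>c<q. min (p c) (r c))"
  unfolding is_dist_def by (intro sum_nonneg) auto

lemma sum_min_eq_1_imp_eq:
  assumes "is_dist q p" "is_dist q r" "(\<Sum>c<q. min (p c) (r c)) = 1" "c < q"
  shows "p c = r c"
proof -
  have zero: "f c = 0" if "\<forall>x\<in>{..<q}. 0 \<le> f x" "sum f {..<q} = 0" for f :: "nat \<Rightarrow> real"
    using that assms(4) sum_nonneg_eq_0_iff[of "{..<q}" f] by auto
  have "(\<Sum>c<q. p c - min (p c) (r c)) = 0" "(\<Sum>c<q. r c - min (p c) (r c)) = 0"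
    using assms(1-3) unfolding is_dist_def by (simp_all add: sum_subtractf)
  then have "p c - min (p c) (r c) = 0" "r c - min (p c) (r c) = 0"
    using zero[of "\<lambda>x. p x - min (p x) (r x)"] zero[of "\<lambda>x. r x - min (p x) (r x)"] by auto
  then show ?thesis by linarith
qed

lemma prod_eq_1_imp_factor_eq_1:
  fixes s :: "'a \<Rightarrow> real"
  assumes "finite A" "\<forall>i\<in>A. 0 \<le> s i \<and> s i \<le> 1" "prod s A = 1" "i \<in> A"
  shows "s i = 1"
proof -
  have "prod s A = s i * prod s (A - {i})" using assms by (simp add: prod.remove)
  moreover have "0 \<le> prod s (A - {i})" "prod s (A - {i}) \<le> 1"
    using assms by (auto intro: prod_nonneg prod_le_1)
  ultimately show ?thesis using assms
    by (metis antisym mult_le_one mult_right_le_one_le nle_le)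
qed

lemma sum_zero_weights:
  fixes a b :: "'a \<Rightarrow> real"
  assumes "finite A" "\<forall>x\<in>A. 0 \<le> a x \<and> 0 \<le> b x" "(\<Sum>x\<in>A. a x + b x) = 0"
  shows "(\<Sum>x\<in>A. a x * f x + b x * g x) = 0"
proof -
  have "\<forall>x\<in>A. a x + b x = 0" using assms by (subst sum_nonneg_eq_0_iff[symmetric]) auto
  then have "\<forall>x\<in>A. a x = 0 \<and> b x = 0" using assms by force
  then show ?thesis by simp
qed

lemma mult_add_lt_mult:
  fixes i n c q :: nat
  assumes "i < n" "c < q"
  shows "i * q + c < n * q"
proof -
  have "i * q + c < Suc i * q" using assms(2) by simp
  also have "\<dots> \<le> n * q" using assms(1) by (intro mult_right_mono) auto
  finally show ?thesis .
qed

section \<open>Running probabilistic RAM programs\<close>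

lemma exec_Suc_step: "exec prog (Suc k) s = bind_pmf (step prog s) (exec prog k)"
proof (induction k arbitrary: s)
  case 0 then show ?case by (simp add: bind_return_pmf bind_return_pmf')
next
  case (Suc k)
  have "exec prog (Suc (Suc k)) s = bind_pmf (exec prog (Suc k) s) (step prog)"
    by simp
  also have "\<dots> = bind_pmf (bind_pmf (step prog s) (exec prog k)) (step prog)"
    by (simp only: Suc)
  also have "\<dots> = bind_pmf (step prog s) (\<lambda>x. bind_pmf (exec prog k x) (step prog))"
    by (simp add: bind_assoc_pmf)
  also have "\<dots> = bind_pmf (step prog s) (exec prog (Suc k))"
    by (rule arg_cong[where f = "bind_pmf (step prog s)"]) (simp add: fun_eq_iff)
  finally show ?case .
qed

lemma exec_halted: "halted prog s \<Longrightarrow> exec prog k s = return_pmf s"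
  by (induction k) (cases s, simp_all add: step_def bind_return_pmf)

lemma measure_bind_bernoulli:
  assumes "0 \<le> p" "p \<le> 1"
  shows "measure_pmf.prob (bind_pmf (bernoulli_pmf p) f) E
       = p * measure_pmf.prob (f True) E + (1 - p) * measure_pmf.prob (f False) E"
proof -
  have "emeasure (measure_pmf (bind_pmf (bernoulli_pmf p) f)) E
     = emeasure (measure_pmf (f True)) E * ennreal p + emeasure (measure_pmf (f False)) E * ennreal (1 - p)"
    using assms by simp
  also have "\<dots> = ennreal (p * measure_pmf.prob (f True) E + (1 - p) * measure_pmf.prob (f False) E)"
    using assms by (simp add: measure_pmf.emeasure_eq_measure ennreal_mult[symmetric]
        ennreal_plus[symmetric] mult.commute del: ennreal_plus)
  finally show ?thesis
    by (simp add: measure_pmf.emeasure_eq_measure) (subst (asm) ennreal_inj; use assms in auto)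
qed

definition reach_prob :: "instr list \<Rightarrow> config set \<Rightarrow> nat \<Rightarrow> config \<Rightarrow> real" where
  "reach_prob prog E k s = measure_pmf.prob (exec prog k s) E"

lemma reach_prob_halted: "halted prog s \<Longrightarrow> reach_prob prog E k s = (if s \<in> E then 1 else 0)"
  by (simp add: reach_prob_def exec_halted)

definition flip_mix :: "real \<Rightarrow> real \<Rightarrow> real \<Rightarrow> real" where
  "flip_mix x A B = max 0 (min 1 x) * A + (1 - max 0 (min 1 x)) * B"

fun step_value :: "(config \<Rightarrow> real) \<Rightarrow> instr \<Rightarrow> nat \<Rightarrow> (nat \<Rightarrow> real) \<Rightarrow> real" where
  "step_value f (Const r c) pc m = f (Suc pc, m(r := of_int c))"
| "step_value f (Arith g r a b) pc m = f (Suc pc, m(r := eval_aop g (m a) (m b)))"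
| "step_value f (Load r a) pc m = f (Suc pc, m(r := m (nat \<lfloor>m a\<rfloor>)))"
| "step_value f (Store a r) pc m = f (Suc pc, m(nat \<lfloor>m a\<rfloor> := m r))"
| "step_value f (JmpLe a b t) pc m = f (if m a \<le> m b then t else Suc pc, m)"
| "step_value f (Flip r a) pc m = flip_mix (m a) (f (Suc pc, m(r := 1))) (f (Suc pc, m(r := 0)))"
| "step_value f Halt pc m = f (pc, m)"

lemma reach_prob_step:
  assumes "pc < length prog" "prog ! pc \<noteq> Halt"
  shows "reach_prob prog E (Suc k) (pc, m) = step_value (reach_prob prog E k) (prog ! pc) pc m"
  using assms unfolding reach_prob_def exec_Suc_step
  by (cases "prog ! pc")
     (simp_all add: step_def halted_def bind_return_pmf map_pmf_def bind_assoc_pmf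
       measure_bind_bernoulli flip_mix_def)

lemma reach_prob_step_pred:
  "0 < k \<Longrightarrow> pc < length prog \<Longrightarrow> prog ! pc \<noteq> Halt \<Longrightarrow>
   reach_prob prog E k (pc, m) = step_value (reach_prob prog E (k - 1)) (prog ! pc) pc m"
  using reach_prob_step[of pc prog E "k - 1" m] by simp

lemma flip_mix_eq: "0 \<le> x \<Longrightarrow> x \<le> 1 \<Longrightarrow> flip_mix x A B = x * A + (1 - x) * B"
  by (simp add: flip_mix_def)

lemma flip_mix_0: "flip_mix 0 A B = B" by (simp add: flip_mix_def)

text \<open>Two coins with biases \<open>a / R\<close> and \<open>b / (R - a)\<close> select three branches with weights \<open>a\<close>, \<open>b\<close>
  and \<open>R' = R - a - b\<close>. The weaker hypotheses on \<open>X10\<close> and \<open>X00\<close> cover the branches that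
  are taken with probability zero.\<close>

lemma flip_mix_two_stage:
  fixes a b R R' S X10 X01 X00 H0 H1 :: real
  assumes "0 \<le> a" "0 \<le> b" "0 \<le> R'" "R = a + b + R'" "0 < R"
    "a * X10 = a * H0" "X01 = H1" "R' > 0 \<Longrightarrow> X00 = S / R'" "R' = 0 \<Longrightarrow> S = 0"
  shows "flip_mix (a / R) X10 (flip_mix (b / (R - a)) X01 X00) = (a * H0 + b * H1 + S) / R"
proof (cases "R - a = 0")
  case True
  hence "b = 0" "R' = 0" using assms by auto
  hence "S = 0" using assms by auto
  have Ra: "R = a" using True by simp
  hence "a > 0" using assms by simp
  have "flip_mix (a / R) X10 (flip_mix (b / (R - a)) X01 X00) = X10" using Ra \<open>a > 0\<close> by (simp add: flip_mix_def)
  also have "X10 = H0" using assms(6) \<open>a > 0\<close> by simp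
  also have "H0 = (a * H0 + b * H1 + S) / R" using Ra \<open>a > 0\<close> \<open>b = 0\<close> \<open>S = 0\<close> by simp
  finally show ?thesis .
next
  case False
  hence Ra: "R - a > 0" using assms by auto
  have x1: "0 \<le> a / R" "a / R \<le> 1" using assms by auto
  have x3: "0 \<le> b / (R - a)" "b / (R - a) \<le> 1" using assms Ra by auto
  have e1: "a / R * X10 = a * H0 / R" using assms(6) by (metis times_divide_eq_left mult.commute)
  show ?thesis
  proof (cases "R' = 0")
    case True
    hence S0: "S = 0" and b: "b = R - a" using assms by auto
    have "flip_mix (b / (R - a)) X01 X00 = H1" using b Ra assms(7) by (simp add: flip_mix_def)
    hence "flip_mix (a / R) X10 (flip_mix (b / (R - a)) X01 X00) = a / R * X10 + (1 - a / R) * H1"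
      using x1 by (simp add: flip_mix_eq)
    also have "1 - a / R = b / R" using b assms(5) by (simp add: field_simps)
    also have "a / R * X10 + b / R * H1 = (a * H0 + b * H1 + S) / R"
      by (simp only: e1 S0) (simp add: add_divide_distrib)
    finally show ?thesis .
  next
    case False
    hence R': "R' > 0" using assms by auto
    have "flip_mix (a / R) X10 (flip_mix (b / (R - a)) X01 X00) = a / R * X10 + (1 - a/R) * (b / (R - a) * H1 + (1 - b/(R-a)) * (S / R'))"
      using x1 x3 assms R' by (simp add: flip_mix_eq)
    also have "1 - a / R = (R - a) / R" using assms(5) by (simp add: field_simps)
    also have "1 - b / (R - a) = R' / (R - a)" using Ra assms(4) by (simp add: field_simps)
    also have "R' / (R - a) * (S / R') = S / (R - a)" using R' by simp
    also have "b / (R - a) * H1 + S / (R - a) = (b * H1 + S) / (R - a)" by (simp add: add_divide_distrib)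
    also have "(R - a) / R * ((b * H1 + S) / (R - a)) = (b * H1 + S) / R" using Ra by simp
    also have "a / R * X10 + (b * H1 + S) / R = (a * H0 + b * H1 + S) / R"
      by (simp only: e1) (simp add: add_divide_distrib)
    finally show ?thesis .
  qed
qed

text \<open>Its blocks start at addresses 0, 10, 68, 87, 128, 183 and 197; jump targets
  are absolute. The input cells \<open>2, \<dots>, 30\<close> double as registers, so \<open>save_code\<close> first moves
  them out of the way and \<open>copy_code\<close> moves the rest of the input after them; \<open>table_code\<close>
  computes the \<open>T\<^sub>i\<close>, \<open>sample_code\<close> draws the coordinates, and \<open>output_code\<close> and
  \<open>restore_code\<close> copy them into cells \<open>0, \<dots>, n - 1\<close>.\<close>

definition boot_code :: "instr list" where
  "boot_code = [
    Arith Times 0 0 1,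
    Arith Plus 0 0 1,
    Arith Plus 0 0 0,
    Arith Plus 0 0 0,
    Arith Plus 0 0 0,
    Arith Plus 0 0 0,
    Store 0 1,
    Arith Divide 1 1 1,
    Arith Plus 0 0 1,
    Arith Plus 0 0 1]"

definition save_code :: "instr list" where
  "save_code = concat (map (\<lambda>j. [Store 0 j, Arith Plus 0 0 1]) [2..<31])"

definition copy_code :: "instr list" where
  "copy_code = [
    Const 2 31,
    Arith Minus 3 0 2,
    Load 4 3,
    Arith Plus 5 4 4,
    Arith Plus 5 5 5,
    Arith Plus 5 5 5,
    Arith Plus 5 5 5,
    Arith Divide 6 3 5,
    Arith Minus 6 6 1,
    Arith Times 7 6 4,
    Arith Plus 8 7 7,
    Arith Plus 8 8 1,
    Arith Plus 8 8 1,
    JmpLe 8 2 87,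
    Load 5 2,
    Store 0 5,
    Arith Plus 2 2 1,
    Arith Plus 0 0 1,
    JmpLe 1 1 81]"

definition table_code :: "instr list" where
  "table_code = [
    Const 5 2,
    Arith Plus 9 3 5,
    Arith Plus 10 9 8,
    Arith Plus 11 10 6,
    Arith Plus 11 11 1,
    Arith Plus 28 10 6,
    Store 28 1,
    Arith Times 12 6 1,
    Arith Plus 27 9 7,
    JmpLe 1 12 98,
    JmpLe 1 1 123,
    Arith Minus 27 27 4,
    Arith Minus 28 28 1,
    Const 13 0,
    Const 14 0,
    Arith Times 15 27 1,
    Arith Plus 16 27 7,
    JmpLe 4 14 117,
    Load 17 15,
    Load 18 16,
    JmpLe 17 18 110,
    Arith Times 19 18 1,
    JmpLe 1 1 112,
    Arith Times 19 17 1,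
    Arith Times 19 19 1,
    Arith Plus 13 13 19,
    Arith Plus 14 14 1,
    Arith Plus 15 15 1,
    Arith Plus 16 16 1,
    JmpLe 1 1 104,
    Arith Plus 5 28 1,
    Load 5 5,
    Arith Times 5 5 13,
    Store 28 5,
    Arith Minus 12 12 1,
    JmpLe 1 1 96,
    Const 20 1,
    Const 12 0,
    Arith Times 27 9 1,
    Arith Times 28 10 1,
    Arith Times 29 11 1]"

definition sample_code :: "instr list" where
  "sample_code = [
    JmpLe 6 12 181,
    Load 5 28,
    Arith Times 5 20 5,
    Arith Minus 22 1 5,
    Arith Plus 5 28 1,
    Load 5 5,
    Arith Times 5 20 5,
    Arith Minus 21 1 5,
    Const 23 0,
    Const 13 0,
    Const 24 0,
    Const 14 0,
    Arith Times 15 27 1,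
    Arith Plus 16 27 7,
    JmpLe 4 14 173,
    Load 17 15,
    Load 18 16,
    JmpLe 17 18 148,
    Arith Times 19 18 1,
    JmpLe 1 1 150,
    Arith Times 19 17 1,
    Arith Times 19 19 1,
    Arith Times 25 21 19,
    Arith Minus 30 1 23,
    Arith Divide 5 25 22,
    Arith Times 5 30 5,
    Flip 26 5,
    Arith Times 5 26 14,
    Arith Plus 13 13 5,
    Arith Plus 23 23 26,
    Arith Minus 22 22 25,
    Arith Minus 25 17 19,
    Arith Minus 30 1 23,
    Arith Divide 5 25 22,
    Arith Times 5 30 5,
    Flip 26 5,
    Arith Times 5 26 14,
    Arith Plus 13 13 5,
    Arith Plus 23 23 26,
    Arith Plus 24 24 26,
    Arith Minus 22 22 25,
    Arith Plus 14 14 1,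
    Arith Plus 15 15 1,
    Arith Plus 16 16 1,
    JmpLe 1 1 142,
    Store 29 13,
    Arith Times 5 20 24,
    Arith Minus 20 20 5,
    Arith Plus 12 12 1,
    Arith Plus 27 27 4,
    Arith Plus 28 28 1,
    Arith Plus 29 29 1,
    JmpLe 1 1 128,
    Const 12 31,
    Arith Plus 29 11 12]"

definition output_code :: "instr list" where
  "output_code = [
    JmpLe 6 12 189,
    Load 5 29,
    Store 12 5,
    Arith Plus 12 12 1,
    Arith Plus 29 29 1,
    JmpLe 1 1 183,
    Load 5 11,
    Arith Plus 15 11 11,
    Const 2 2,
    Arith Plus 15 15 2,
    Store 15 5,
    Const 2 30,
    Arith Plus 0 11 2,
    Load 30 0]"

definition restore_code :: "instr list" where
  "restore_code = concat (map (\<lambda>i. [Const i 1, Arith Minus 0 0 i, Load i 0]) (rev [1..<30]))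
     @ [Arith Plus 0 0 0, Load 0 0, Halt]"

definition sampler_prog :: "instr list" where
  "sampler_prog = boot_code @ save_code @ copy_code @ table_code @ sample_code @ output_code
     @ restore_code"

lemma length_sampler_prog: "length sampler_prog = 287"
  by (simp add: sampler_prog_def boot_code_def save_code_def copy_code_def table_code_def
      sample_code_def output_code_def restore_code_def upt_rec)

lemma sampler_prog_nth:
  "sampler_prog ! 0 = Arith Times 0 0 1"
  "sampler_prog ! 1 = Arith Plus 0 0 1"
  "sampler_prog ! 2 = Arith Plus 0 0 0"
  "sampler_prog ! 3 = Arith Plus 0 0 0"
  "sampler_prog ! 4 = Arith Plus 0 0 0"
  "sampler_prog ! 5 = Arith Plus 0 0 0"
  "sampler_prog ! 6 = Store 0 1"
  "sampler_prog ! 7 = Arith Divide 1 1 1"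
  "sampler_prog ! 8 = Arith Plus 0 0 1"
  "sampler_prog ! 9 = Arith Plus 0 0 1"
  "sampler_prog ! 10 = Store 0 2"
  "sampler_prog ! 11 = Arith Plus 0 0 1"
  "sampler_prog ! 12 = Store 0 3"
  "sampler_prog ! 13 = Arith Plus 0 0 1"
  "sampler_prog ! 14 = Store 0 4"
  "sampler_prog ! 15 = Arith Plus 0 0 1"
  "sampler_prog ! 16 = Store 0 5"
  "sampler_prog ! 17 = Arith Plus 0 0 1"
  "sampler_prog ! 18 = Store 0 6"
  "sampler_prog ! 19 = Arith Plus 0 0 1"
  "sampler_prog ! 20 = Store 0 7"
  "sampler_prog ! 21 = Arith Plus 0 0 1"
  "sampler_prog ! 22 = Store 0 8"
  "sampler_prog ! 23 = Arith Plus 0 0 1"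
  "sampler_prog ! 24 = Store 0 9"
  "sampler_prog ! 25 = Arith Plus 0 0 1"
  "sampler_prog ! 26 = Store 0 10"
  "sampler_prog ! 27 = Arith Plus 0 0 1"
  "sampler_prog ! 28 = Store 0 11"
  "sampler_prog ! 29 = Arith Plus 0 0 1"
  "sampler_prog ! 30 = Store 0 12"
  "sampler_prog ! 31 = Arith Plus 0 0 1"
  "sampler_prog ! 32 = Store 0 13"
  "sampler_prog ! 33 = Arith Plus 0 0 1"
  "sampler_prog ! 34 = Store 0 14"
  "sampler_prog ! 35 = Arith Plus 0 0 1"
  "sampler_prog ! 36 = Store 0 15"
  "sampler_prog ! 37 = Arith Plus 0 0 1"
  "sampler_prog ! 38 = Store 0 16"
  "sampler_prog ! 39 = Arith Plus 0 0 1"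
  "sampler_prog ! 40 = Store 0 17"
  "sampler_prog ! 41 = Arith Plus 0 0 1"
  "sampler_prog ! 42 = Store 0 18"
  "sampler_prog ! 43 = Arith Plus 0 0 1"
  "sampler_prog ! 44 = Store 0 19"
  "sampler_prog ! 45 = Arith Plus 0 0 1"
  "sampler_prog ! 46 = Store 0 20"
  "sampler_prog ! 47 = Arith Plus 0 0 1"
  "sampler_prog ! 48 = Store 0 21"
  "sampler_prog ! 49 = Arith Plus 0 0 1"
  "sampler_prog ! 50 = Store 0 22"
  "sampler_prog ! 51 = Arith Plus 0 0 1"
  "sampler_prog ! 52 = Store 0 23"
  "sampler_prog ! 53 = Arith Plus 0 0 1"
  "sampler_prog ! 54 = Store 0 24"
  "sampler_prog ! 55 = Arith Plus 0 0 1"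
  "sampler_prog ! 56 = Store 0 25"
  "sampler_prog ! 57 = Arith Plus 0 0 1"
  "sampler_prog ! 58 = Store 0 26"
  "sampler_prog ! 59 = Arith Plus 0 0 1"
  "sampler_prog ! 60 = Store 0 27"
  "sampler_prog ! 61 = Arith Plus 0 0 1"
  "sampler_prog ! 62 = Store 0 28"
  "sampler_prog ! 63 = Arith Plus 0 0 1"
  "sampler_prog ! 64 = Store 0 29"
  "sampler_prog ! 65 = Arith Plus 0 0 1"
  "sampler_prog ! 66 = Store 0 30"
  "sampler_prog ! 67 = Arith Plus 0 0 1"
  "sampler_prog ! 68 = Const 2 31"
  "sampler_prog ! 69 = Arith Minus 3 0 2"
  "sampler_prog ! 70 = Load 4 3"
  "sampler_prog ! 71 = Arith Plus 5 4 4"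
  "sampler_prog ! 72 = Arith Plus 5 5 5"
  "sampler_prog ! 73 = Arith Plus 5 5 5"
  "sampler_prog ! 74 = Arith Plus 5 5 5"
  "sampler_prog ! 75 = Arith Divide 6 3 5"
  "sampler_prog ! 76 = Arith Minus 6 6 1"
  "sampler_prog ! 77 = Arith Times 7 6 4"
  "sampler_prog ! 78 = Arith Plus 8 7 7"
  "sampler_prog ! 79 = Arith Plus 8 8 1"
  "sampler_prog ! 80 = Arith Plus 8 8 1"
  "sampler_prog ! 81 = JmpLe 8 2 87"
  "sampler_prog ! 82 = Load 5 2"
  "sampler_prog ! 83 = Store 0 5"
  "sampler_prog ! 84 = Arith Plus 2 2 1"
  "sampler_prog ! 85 = Arith Plus 0 0 1"
  "sampler_prog ! 86 = JmpLe 1 1 81"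
  "sampler_prog ! 87 = Const 5 2"
  "sampler_prog ! 88 = Arith Plus 9 3 5"
  "sampler_prog ! 89 = Arith Plus 10 9 8"
  "sampler_prog ! 90 = Arith Plus 11 10 6"
  "sampler_prog ! 91 = Arith Plus 11 11 1"
  "sampler_prog ! 92 = Arith Plus 28 10 6"
  "sampler_prog ! 93 = Store 28 1"
  "sampler_prog ! 94 = Arith Times 12 6 1"
  "sampler_prog ! 95 = Arith Plus 27 9 7"
  "sampler_prog ! 96 = JmpLe 1 12 98"
  "sampler_prog ! 97 = JmpLe 1 1 123"
  "sampler_prog ! 98 = Arith Minus 27 27 4"
  "sampler_prog ! 99 = Arith Minus 28 28 1"
  "sampler_prog ! 100 = Const 13 0"
  "sampler_prog ! 101 = Const 14 0"
  "sampler_prog ! 102 = Arith Times 15 27 1"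
  "sampler_prog ! 103 = Arith Plus 16 27 7"
  "sampler_prog ! 104 = JmpLe 4 14 117"
  "sampler_prog ! 105 = Load 17 15"
  "sampler_prog ! 106 = Load 18 16"
  "sampler_prog ! 107 = JmpLe 17 18 110"
  "sampler_prog ! 108 = Arith Times 19 18 1"
  "sampler_prog ! 109 = JmpLe 1 1 112"
  "sampler_prog ! 110 = Arith Times 19 17 1"
  "sampler_prog ! 111 = Arith Times 19 19 1"
  "sampler_prog ! 112 = Arith Plus 13 13 19"
  "sampler_prog ! 113 = Arith Plus 14 14 1"
  "sampler_prog ! 114 = Arith Plus 15 15 1"
  "sampler_prog ! 115 = Arith Plus 16 16 1"
  "sampler_prog ! 116 = JmpLe 1 1 104"
  "sampler_prog ! 117 = Arith Plus 5 28 1"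
  "sampler_prog ! 118 = Load 5 5"
  "sampler_prog ! 119 = Arith Times 5 5 13"
  "sampler_prog ! 120 = Store 28 5"
  "sampler_prog ! 121 = Arith Minus 12 12 1"
  "sampler_prog ! 122 = JmpLe 1 1 96"
  "sampler_prog ! 123 = Const 20 1"
  "sampler_prog ! 124 = Const 12 0"
  "sampler_prog ! 125 = Arith Times 27 9 1"
  "sampler_prog ! 126 = Arith Times 28 10 1"
  "sampler_prog ! 127 = Arith Times 29 11 1"
  "sampler_prog ! 128 = JmpLe 6 12 181"
  "sampler_prog ! 129 = Load 5 28"
  "sampler_prog ! 130 = Arith Times 5 20 5"
  "sampler_prog ! 131 = Arith Minus 22 1 5"
  "sampler_prog ! 132 = Arith Plus 5 28 1"
  "sampler_prog ! 133 = Load 5 5"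
  "sampler_prog ! 134 = Arith Times 5 20 5"
  "sampler_prog ! 135 = Arith Minus 21 1 5"
  "sampler_prog ! 136 = Const 23 0"
  "sampler_prog ! 137 = Const 13 0"
  "sampler_prog ! 138 = Const 24 0"
  "sampler_prog ! 139 = Const 14 0"
  "sampler_prog ! 140 = Arith Times 15 27 1"
  "sampler_prog ! 141 = Arith Plus 16 27 7"
  "sampler_prog ! 142 = JmpLe 4 14 173"
  "sampler_prog ! 143 = Load 17 15"
  "sampler_prog ! 144 = Load 18 16"
  "sampler_prog ! 145 = JmpLe 17 18 148"
  "sampler_prog ! 146 = Arith Times 19 18 1"
  "sampler_prog ! 147 = JmpLe 1 1 150"
  "sampler_prog ! 148 = Arith Times 19 17 1"
  "sampler_prog ! 149 = Arith Times 19 19 1"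
  "sampler_prog ! 150 = Arith Times 25 21 19"
  "sampler_prog ! 151 = Arith Minus 30 1 23"
  "sampler_prog ! 152 = Arith Divide 5 25 22"
  "sampler_prog ! 153 = Arith Times 5 30 5"
  "sampler_prog ! 154 = Flip 26 5"
  "sampler_prog ! 155 = Arith Times 5 26 14"
  "sampler_prog ! 156 = Arith Plus 13 13 5"
  "sampler_prog ! 157 = Arith Plus 23 23 26"
  "sampler_prog ! 158 = Arith Minus 22 22 25"
  "sampler_prog ! 159 = Arith Minus 25 17 19"
  "sampler_prog ! 160 = Arith Minus 30 1 23"
  "sampler_prog ! 161 = Arith Divide 5 25 22"
  "sampler_prog ! 162 = Arith Times 5 30 5"
  "sampler_prog ! 163 = Flip 26 5"
  "sampler_prog ! 164 = Arith Times 5 26 14"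
  "sampler_prog ! 165 = Arith Plus 13 13 5"
  "sampler_prog ! 166 = Arith Plus 23 23 26"
  "sampler_prog ! 167 = Arith Plus 24 24 26"
  "sampler_prog ! 168 = Arith Minus 22 22 25"
  "sampler_prog ! 169 = Arith Plus 14 14 1"
  "sampler_prog ! 170 = Arith Plus 15 15 1"
  "sampler_prog ! 171 = Arith Plus 16 16 1"
  "sampler_prog ! 172 = JmpLe 1 1 142"
  "sampler_prog ! 173 = Store 29 13"
  "sampler_prog ! 174 = Arith Times 5 20 24"
  "sampler_prog ! 175 = Arith Minus 20 20 5"
  "sampler_prog ! 176 = Arith Plus 12 12 1"
  "sampler_prog ! 177 = Arith Plus 27 27 4"
  "sampler_prog ! 178 = Arith Plus 28 28 1"
  "sampler_prog ! 179 = Arith Plus 29 29 1"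
  "sampler_prog ! 180 = JmpLe 1 1 128"
  "sampler_prog ! 181 = Const 12 31"
  "sampler_prog ! 182 = Arith Plus 29 11 12"
  "sampler_prog ! 183 = JmpLe 6 12 189"
  "sampler_prog ! 184 = Load 5 29"
  "sampler_prog ! 185 = Store 12 5"
  "sampler_prog ! 186 = Arith Plus 12 12 1"
  "sampler_prog ! 187 = Arith Plus 29 29 1"
  "sampler_prog ! 188 = JmpLe 1 1 183"
  "sampler_prog ! 189 = Load 5 11"
  "sampler_prog ! 190 = Arith Plus 15 11 11"
  "sampler_prog ! 191 = Const 2 2"
  "sampler_prog ! 192 = Arith Plus 15 15 2"
  "sampler_prog ! 193 = Store 15 5"
  "sampler_prog ! 194 = Const 2 30"
  "sampler_prog ! 195 = Arith Plus 0 11 2"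
  "sampler_prog ! 196 = Load 30 0"
  "sampler_prog ! 197 = Const 29 1"
  "sampler_prog ! 198 = Arith Minus 0 0 29"
  "sampler_prog ! 199 = Load 29 0"
  "sampler_prog ! 200 = Const 28 1"
  "sampler_prog ! 201 = Arith Minus 0 0 28"
  "sampler_prog ! 202 = Load 28 0"
  "sampler_prog ! 203 = Const 27 1"
  "sampler_prog ! 204 = Arith Minus 0 0 27"
  "sampler_prog ! 205 = Load 27 0"
  "sampler_prog ! 206 = Const 26 1"
  "sampler_prog ! 207 = Arith Minus 0 0 26"
  "sampler_prog ! 208 = Load 26 0"
  "sampler_prog ! 209 = Const 25 1"
  "sampler_prog ! 210 = Arith Minus 0 0 25"
  "sampler_prog ! 211 = Load 25 0"
  "sampler_prog ! 212 = Const 24 1"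
  "sampler_prog ! 213 = Arith Minus 0 0 24"
  "sampler_prog ! 214 = Load 24 0"
  "sampler_prog ! 215 = Const 23 1"
  "sampler_prog ! 216 = Arith Minus 0 0 23"
  "sampler_prog ! 217 = Load 23 0"
  "sampler_prog ! 218 = Const 22 1"
  "sampler_prog ! 219 = Arith Minus 0 0 22"
  "sampler_prog ! 220 = Load 22 0"
  "sampler_prog ! 221 = Const 21 1"
  "sampler_prog ! 222 = Arith Minus 0 0 21"
  "sampler_prog ! 223 = Load 21 0"
  "sampler_prog ! 224 = Const 20 1"
  "sampler_prog ! 225 = Arith Minus 0 0 20"
  "sampler_prog ! 226 = Load 20 0"
  "sampler_prog ! 227 = Const 19 1"
  "sampler_prog ! 228 = Arith Minus 0 0 19"
  "sampler_prog ! 229 = Load 19 0"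
  "sampler_prog ! 230 = Const 18 1"
  "sampler_prog ! 231 = Arith Minus 0 0 18"
  "sampler_prog ! 232 = Load 18 0"
  "sampler_prog ! 233 = Const 17 1"
  "sampler_prog ! 234 = Arith Minus 0 0 17"
  "sampler_prog ! 235 = Load 17 0"
  "sampler_prog ! 236 = Const 16 1"
  "sampler_prog ! 237 = Arith Minus 0 0 16"
  "sampler_prog ! 238 = Load 16 0"
  "sampler_prog ! 239 = Const 15 1"
  "sampler_prog ! 240 = Arith Minus 0 0 15"
  "sampler_prog ! 241 = Load 15 0"
  "sampler_prog ! 242 = Const 14 1"
  "sampler_prog ! 243 = Arith Minus 0 0 14"
  "sampler_prog ! 244 = Load 14 0"
  "sampler_prog ! 245 = Const 13 1"
  "sampler_prog ! 246 = Arith Minus 0 0 13"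
  "sampler_prog ! 247 = Load 13 0"
  "sampler_prog ! 248 = Const 12 1"
  "sampler_prog ! 249 = Arith Minus 0 0 12"
  "sampler_prog ! 250 = Load 12 0"
  "sampler_prog ! 251 = Const 11 1"
  "sampler_prog ! 252 = Arith Minus 0 0 11"
  "sampler_prog ! 253 = Load 11 0"
  "sampler_prog ! 254 = Const 10 1"
  "sampler_prog ! 255 = Arith Minus 0 0 10"
  "sampler_prog ! 256 = Load 10 0"
  "sampler_prog ! 257 = Const 9 1"
  "sampler_prog ! 258 = Arith Minus 0 0 9"
  "sampler_prog ! 259 = Load 9 0"
  "sampler_prog ! 260 = Const 8 1"
  "sampler_prog ! 261 = Arith Minus 0 0 8"
  "sampler_prog ! 262 = Load 8 0"
  "sampler_prog ! 263 = Const 7 1"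
  "sampler_prog ! 264 = Arith Minus 0 0 7"
  "sampler_prog ! 265 = Load 7 0"
  "sampler_prog ! 266 = Const 6 1"
  "sampler_prog ! 267 = Arith Minus 0 0 6"
  "sampler_prog ! 268 = Load 6 0"
  "sampler_prog ! 269 = Const 5 1"
  "sampler_prog ! 270 = Arith Minus 0 0 5"
  "sampler_prog ! 271 = Load 5 0"
  "sampler_prog ! 272 = Const 4 1"
  "sampler_prog ! 273 = Arith Minus 0 0 4"
  "sampler_prog ! 274 = Load 4 0"
  "sampler_prog ! 275 = Const 3 1"
  "sampler_prog ! 276 = Arith Minus 0 0 3"
  "sampler_prog ! 277 = Load 3 0"
  "sampler_prog ! 278 = Const 2 1"
  "sampler_prog ! 279 = Arith Minus 0 0 2"
  "sampler_prog ! 280 = Load 2 0"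
  "sampler_prog ! 281 = Const 1 1"
  "sampler_prog ! 282 = Arith Minus 0 0 1"
  "sampler_prog ! 283 = Load 1 0"
  "sampler_prog ! 284 = Arith Plus 0 0 0"
  "sampler_prog ! 285 = Load 0 0"
  "sampler_prog ! 286 = Halt"
  by (simp_all add: sampler_prog_def boot_code_def save_code_def copy_code_def table_code_def
      sample_code_def output_code_def restore_code_def nth_append upt_rec)

lemma real_of_nat_normalise:
  "real a + 1 = real (a + 1)"
  "real a + numeral k = real (a + numeral k)"
  "real (a + numeral k) - 1 = real (a + pred_numeral k)"
  "real (a + 1) - 1 = real a"
  "real (Suc a) - 1 = real a"
  "nat \<lfloor>real a\<rfloor> = a"
  by (simp, simp, simp add: numeral_eq_Suc, simp_all)

lemma real_of_nat_add_diff_cancel: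
  "real (a + b) - real b = real a"
  "real (a + numeral k) - numeral k = real a"
  by simp_all

text \<open>Cells \<open>0, \<dots>, 30\<close> serve as registers; a
  memory is split by \<open>regs_heap\<close> into the register file and the rest, and writes go through
  \<open>reg_upd\<close>, an opaque copy of function update, so that the two parts are rewritten separately.
  Addresses are kept in the form \<open>real (nat expression)\<close> so that \<open>nat \<lfloor>_\<rfloor>\<close> evaluates; this
  is why \<open>of_nat_add\<close> and friends must be removed from the simpset.\<close>

definition regs_heap :: "(nat \<Rightarrow> real) \<Rightarrow> (nat \<Rightarrow> real) \<Rightarrow> nat \<Rightarrow> real" where
  "regs_heap r h a = (if a < 31 then r a else h a)"

definition reg_upd :: "(nat \<Rightarrow> real) \<Rightarrow> nat \<Rightarrow> real \<Rightarrow> nat \<Rightarrow> real" where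
  "reg_upd r k v = r(k := v)"

lemma reg_upd_same [simp]: "reg_upd r k v k = v"
  and reg_upd_other [simp]: "j \<noteq> k \<Longrightarrow> reg_upd r k v j = r j"
  by (simp_all add: reg_upd_def)

lemma regs_heap_upd:
  "(regs_heap r h)(a := v) = (if a < 31 then regs_heap (reg_upd r a v) h else regs_heap r (reg_upd h a v))"
  by (auto simp: regs_heap_def fun_eq_iff reg_upd_def)

lemma regs_heap_apply: "regs_heap r h a = (if a < 31 then r a else h a)"
  by (simp add: regs_heap_def)

lemma regs_heap_same: "regs_heap m m = m"
  by (simp add: regs_heap_def fun_eq_iff)

lemma reach_prob_regs_heap: "reach_prob p E k (pc, m) = reach_prob p E k (pc, regs_heap m m)"
  by (simp add: regs_heap_same)

lemmas symbolic_run = reach_prob_step_pred length_sampler_prog sampler_prog_nth real_of_nat_normalise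
  of_nat_add[symmetric] of_nat_mult[symmetric] regs_heap_upd regs_heap_apply

lemma prog_restore:
  "\<forall>i\<in>{1..<30::nat}. sampler_prog ! (197 + 3 * (29 - i)) = Const i 1
     \<and> sampler_prog ! (198 + 3 * (29 - i)) = Arith Minus 0 0 i \<and> sampler_prog ! (199 + 3 * (29 - i)) = Load i 0"
  by (simp add: sampler_prog_nth atLeastLessThan_nat_numeral)

section \<open>Memory layout\<close>

text \<open>Input cell \<open>x \<ge> 2\<close> is copied to \<open>save_base n q + x\<close>; the boot code computes
  \<open>save_base n q = 16 (n + 1) q\<close> by repeated doubling, which is clear of both the 31 registers and
  the input. So \<open>P i c\<close> and \<open>Q i c\<close> end up at \<open>marg_base n q + i q + c\<close> and
  \<open>marg_base n q + n q + i q + c\<close>, \<open>agree_base n q + i\<close> receives \<open>T\<^sub>i\<close> (\<open>i \<le> n\<close>), and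
  \<open>out_base n q + i\<close> the sampled coordinate \<open>i\<close>.\<close>

definition save_base :: "nat \<Rightarrow> nat \<Rightarrow> nat" where "save_base n q = 16*(n+1)*q"

definition marg_base :: "nat \<Rightarrow> nat \<Rightarrow> nat" where "marg_base n q = save_base n q + 2"

definition agree_base :: "nat \<Rightarrow> nat \<Rightarrow> nat" where "agree_base n q = save_base n q + 2*n*q + 4"

definition out_base :: "nat \<Rightarrow> nat \<Rightarrow> nat" where "out_base n q = agree_base n q + n + 1"

locale sampler =
  fixes n q :: nat and P Q :: "nat \<Rightarrow> nat \<Rightarrow> real" and w :: "nat list"
  assumes n1: "1 \<le> n" and q1: "1 \<le> q"
    and dP: "is_product_dist n q P" and dQ: "is_product_dist n q Q" and wc: "w \<in> cube n q"
begin

abbreviation V where "V \<equiv> reach_prob sampler_prog (outputs sampler_prog n w)"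

definition ovl :: "nat \<Rightarrow> nat \<Rightarrow> real" where "ovl i c = min (P i c) (Q i c)"

definition ovl_mass :: "nat \<Rightarrow> real" where "ovl_mass i = (\<Sum>c<q. ovl i c)"

definition agree_prob :: "nat \<Rightarrow> real" where "agree_prob i = (\<Prod>k\<in>{i..<n}. ovl_mass k)"

lemma P_nonneg: "i < n \<Longrightarrow> c < q \<Longrightarrow> 0 \<le> P i c"
  using dP unfolding is_product_dist_def is_dist_def by auto

lemma Q_nonneg: "i < n \<Longrightarrow> c < q \<Longrightarrow> 0 \<le> Q i c"
  using dQ unfolding is_product_dist_def is_dist_def by auto

lemma ovl_nonneg: "i < n \<Longrightarrow> c < q \<Longrightarrow> 0 \<le> ovl i c"
  using P_nonneg Q_nonneg unfolding ovl_def by auto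

lemma agree_prob_n: "agree_prob n = 1" unfolding agree_prob_def by simp

lemma agree_prob_step: "i < n \<Longrightarrow> agree_prob i = ovl_mass i * agree_prob (Suc i)"
  unfolding agree_prob_def by (simp add: prod.atLeast_Suc_lessThan)

lemma ovl_mass_bounds: "i < n \<Longrightarrow> 0 \<le> ovl_mass i \<and> ovl_mass i \<le> 1"
  using sum_min_le_1[of q "P i" "Q i"] sum_min_nonneg[of q "P i" "Q i"] dP dQ
  unfolding ovl_mass_def ovl_def is_product_dist_def by auto

lemma agree_prob_bounds: "0 \<le> agree_prob i \<and> agree_prob i \<le> 1"
  unfolding agree_prob_def using ovl_mass_bounds by (auto intro: prod_nonneg prod_le_1)

lemma agree_prob_eq_1_imp_eq:
  assumes "agree_prob i = 1" "i \<le> k" "k < n" "c < q"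
  shows "P k c = Q k c"
proof -
  have "ovl_mass k = 1"
    by (rule prod_eq_1_imp_factor_eq_1[of "{i..<n}" ovl_mass])
       (use assms ovl_mass_bounds in \<open>auto simp: agree_prob_def\<close>)
  then show ?thesis
    using sum_min_eq_1_imp_eq[of q "P k" "Q k" c] dP dQ assms
    unfolding ovl_mass_def ovl_def is_product_dist_def by auto
qed

lemma agree_prob_0_less:
  assumes "\<exists>w'\<in>cube n q. prod_mass n P w' \<noteq> prod_mass n Q w'"
  shows "agree_prob 0 < 1"
proof (rule ccontr)
  assume "\<not> agree_prob 0 < 1"
  then have "agree_prob 0 = 1" using agree_prob_bounds[of 0] by simp
  then have "prod_mass n P w' = prod_mass n Q w'" if "w' \<in> cube n q" for w'
    using that agree_prob_eq_1_imp_eq[of 0] unfolding prod_mass_def cube_def by (intro prod.cong) auto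
  then show False using assms by blast
qed

lemma w_nth_less: "k < n \<Longrightarrow> w!k < q" using wc unfolding cube_def by auto

definition P_tail :: "nat \<Rightarrow> real" where "P_tail i = (\<Prod>k\<in>{i..<n}. P k (w!k))"

definition ovl_tail :: "nat \<Rightarrow> real" where "ovl_tail i = (\<Prod>k\<in>{i..<n}. ovl k (w!k))"

lemma P_tail_step: "i < n \<Longrightarrow> P_tail i = P i (w!i) * P_tail (Suc i)"
  unfolding P_tail_def by (simp add: prod.atLeast_Suc_lessThan)

lemma ovl_tail_step: "i < n \<Longrightarrow> ovl_tail i = ovl i (w!i) * ovl_tail (Suc i)"
  unfolding ovl_tail_def by (simp add: prod.atLeast_Suc_lessThan)

lemma ovl_tail_eq_P_tail: "agree_prob i = 1 \<Longrightarrow> ovl_tail i = P_tail i"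
  unfolding ovl_tail_def P_tail_def ovl_def
  by (rule prod.cong) (auto dest: agree_prob_eq_1_imp_eq intro: w_nth_less)

text \<open>The probability that the run outputs \<open>w\<close> once coordinates \<open>j < i\<close> have been written (as
  \<open>ov j\<close>) and the flag is \<open>F\<close>.\<close>

definition success_prob :: "nat \<Rightarrow> real \<Rightarrow> (nat \<Rightarrow> real) \<Rightarrow> real" where
  "success_prob i F ov = (if \<forall>j<i. ov j = real (w!j) then 1 else 0) * ((P_tail i - F * ovl_tail i) / (1 - F * agree_prob i))"

lemma success_prob_cong: "(\<forall>j<i. ov j = ov' j) \<Longrightarrow> success_prob i F ov = success_prob i F ov'"
  unfolding success_prob_def by simp

abbreviation "agree_wt \<gamma> i c \<equiv> \<gamma> * ovl i c"
abbreviation "split_wt i c \<equiv> P i c - ovl i c"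

lemma split_wt_nonneg: "0 \<le> split_wt i c"
  unfolding ovl_def by auto

lemma sum_coord_weights:
  assumes i: "i < n"
  shows "(\<Sum>c\<in>{0..<q}. agree_wt (1 - F * agree_prob (Suc i)) i c + split_wt i c) = 1 - F * agree_prob i"
proof -
  have "(\<Sum>c\<in>{0..<q}. agree_wt (1 - F * agree_prob (Suc i)) i c + split_wt i c)
      = (1 - F * agree_prob (Suc i)) * ovl_mass i + ((\<Sum>c<q. P i c) - ovl_mass i)"
    unfolding ovl_mass_def by (simp add: sum.distrib sum_distrib_left sum_subtractf atLeast0LessThan)
  also have "(\<Sum>c<q. P i c) = 1" using dP i unfolding is_product_dist_def is_dist_def by auto
  finally show ?thesis using agree_prob_step[OF i] by (simp add: algebra_simps)
qed

lemma success_prob_step: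
  assumes i: "i < n" and F: "F = 0 \<or> F = 1" and R: "1 - F * agree_prob i > 0"
  shows "(\<Sum>c\<in>{0..<q}. agree_wt (1 - F * agree_prob (Suc i)) i c * success_prob (Suc i) (F - F * 0) (\<lambda>j. if j = i then real c else ov j)
        + split_wt i c * success_prob (Suc i) (F - F * 1) (\<lambda>j. if j = i then real c else ov j)) / (1 - F * agree_prob i)
      = success_prob i F ov"
proof -
  define \<gamma> where "\<gamma> = 1 - F * agree_prob (Suc i)"
  define pre :: real where "pre = (if \<forall>j<i. ov j = real (w!j) then 1 else 0)"
  define wi where "wi = w!i"
  have wi: "wi < q" unfolding wi_def using w_nth_less i by simp
  define Y0 where "Y0 = (P_tail (Suc i) - F * ovl_tail (Suc i)) / \<gamma>"
  have ind: "(if \<forall>j<Suc i. (if j = i then real c else ov j) = real (w!j) then 1 else 0) =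
        (if c = wi then pre else (0::real))" for c
  proof -
    have "(\<forall>j<Suc i. (if j = i then real c else ov j) = real (w!j)) \<longleftrightarrow> (c = wi \<and> (\<forall>j<i. ov j = real (w!j)))"
      unfolding wi_def by (auto simp: less_Suc_eq)
    thus ?thesis unfolding pre_def by auto
  qed
  have tm: "agree_wt \<gamma> i c * success_prob (Suc i) (F - F * 0) (\<lambda>j. if j = i then real c else ov j)
        + split_wt i c * success_prob (Suc i) (F - F * 1) (\<lambda>j. if j = i then real c else ov j)
      = (if c = wi then pre * (agree_wt \<gamma> i wi * Y0 + split_wt i wi * P_tail (Suc i)) else 0)" for c
    unfolding success_prob_def ind Y0_def \<gamma>_def by (auto simp: algebra_simps)
  have "(\<Sum>c\<in>{0..<q}. agree_wt \<gamma> i c * success_prob (Suc i) (F - F * 0) (\<lambda>j. if j = i then real c else ov j)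
        + split_wt i c * success_prob (Suc i) (F - F * 1) (\<lambda>j. if j = i then real c else ov j))
      = pre * (agree_wt \<gamma> i wi * Y0 + split_wt i wi * P_tail (Suc i))"
    unfolding tm using wi by (simp add: sum.delta')
  also have "agree_wt \<gamma> i wi * Y0 = ovl i wi * (P_tail (Suc i) - F * ovl_tail (Suc i))"
  proof (cases "\<gamma> = 0")
    case True
    hence "F = 1" "agree_prob (Suc i) = 1" using F unfolding \<gamma>_def by auto
    hence "ovl_tail (Suc i) = P_tail (Suc i)" by (simp add: ovl_tail_eq_P_tail)
    thus ?thesis using True \<open>F = 1\<close> by simp
  next
    case False
    thus ?thesis unfolding Y0_def by simp
  qed
  also have "ovl i wi * (P_tail (Suc i) - F * ovl_tail (Suc i)) + split_wt i wi * P_tail (Suc i) = P_tail i - F * ovl_tail i"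
    using P_tail_step[OF i] ovl_tail_step[OF i] unfolding wi_def by (simp add: algebra_simps)
  finally show ?thesis unfolding success_prob_def pre_def \<gamma>_def by simp
qed

lemma success_prob_eq_pi_cond:
  assumes "is_greedy_coupling n q P Q Cpl"
  shows "success_prob 0 1 (\<lambda>_. 0) = pi_cond n q Cpl w"
  unfolding pi_cond_greedy[OF assms dP wc] success_prob_def P_tail_def ovl_tail_def agree_prob_def ovl_mass_def ovl_def
  by (simp add: atLeast0LessThan)

lemma save_base_ge: "save_base n q \<ge> 32"
proof -
  have "16 * (n + 1) * q \<ge> 16 * 2 * 1" using n1 q1 by (intro mult_mono) auto
  then show ?thesis unfolding save_base_def by simp
qed

lemma save_base_gt: "save_base n q \<ge> 2 + 2*n*q"
proof -
  have "16*(n+1)*q \<ge> 2*n*q + 2*q" by (simp add: algebra_simps)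
  moreover have "2*q \<ge> 2" using q1 by simp
  ultimately show ?thesis unfolding save_base_def by simp
qed

lemma marg_base_ge: "marg_base n q \<ge> 32"
  using save_base_ge unfolding marg_base_def by simp

lemma agree_base_ge: "agree_base n q \<ge> 32" using marg_base_ge unfolding marg_base_def agree_base_def by simp

lemma out_base_ge: "out_base n q \<ge> 32" using agree_base_ge unfolding out_base_def by simp

lemma out_base_gt: "out_base n q > n" unfolding out_base_def by simp

lemma marg_addr_lt:
  assumes "i' < n" "c < q"
  shows "marg_base n q + i' * q + c < agree_base n q" "marg_base n q + i' * q + n * q + c < agree_base n q"
  using mult_add_lt_mult[OF assms] unfolding marg_base_def agree_base_def by (auto simp: algebra_simps)

lemma input_mem_P: "i < n \<Longrightarrow> c < q \<Longrightarrow> input_mem n q P Q (2 + i*q + c) = P i c"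
proof -
  assume a: "i < n" "c < q"
  have l: "i*q + c < n*q" by (rule mult_add_lt_mult[OF a])
  have d: "(i*q + c) div q = i" "(i*q + c) mod q = c" using a by auto
  show ?thesis unfolding input_mem_def using l d by simp
qed

lemma input_mem_Q: "i < n \<Longrightarrow> c < q \<Longrightarrow> input_mem n q P Q (2 + n*q + i*q + c) = Q i c"
proof -
  assume a: "i < n" "c < q"
  have l: "i*q + c < n*q" by (rule mult_add_lt_mult[OF a])
  have d: "(i*q + c) div q = i" "(i*q + c) mod q = c" using a by auto
  show ?thesis unfolding input_mem_def using l d by (simp add: algebra_simps)
qed

text \<open>Output coordinate \<open>0\<close> is parked at \<open>2 z + 2\<close> because cell \<open>0\<close> serves as the pointer
  while the registers \<open>30, \<dots>, 1\<close> are restored from \<open>z + 30, \<dots>, z + 1\<close>.\<close>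

definition output_test :: "(nat \<Rightarrow> real) \<Rightarrow> nat \<Rightarrow> real" where
  "output_test hh z = (if \<forall>j<n. (if j = 0 then hh (2*z+2) else if j \<le> 30 then hh (z + j) else hh j) = real (w!j)
               then 1 else 0)"

lemma halted_output: "V k (286, m') = (if \<forall>j<n. m' j = real (w!j) then 1 else 0)"
  by (simp add: reach_prob_halted halted_def sampler_prog_nth outputs_def)

lemma halted_restored: "V k (286, regs_heap (reg_upd (reg_upd m 0 x) 0 v) m) =
   (if \<forall>j<n. (if j = 0 then v else m j) = real (w!j) then 1 else 0)"
  unfolding halted_output by (simp add: regs_heap_def reg_upd_def)

lemma restore_regs:
  assumes "i \<le> 29" "m 0 = real (z + i + 1)" "\<forall>a\<ge>31. m a = hh a"
    "\<forall>j. i < j \<longrightarrow> j \<le> 30 \<longrightarrow> m j = hh (z + j)" "z \<ge> 31"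
  shows "V (3*i + 2 + k) (197 + 3*(29-i), m) = output_test hh z"
  using assms
proof (induction i arbitrary: m)
  case 0
  then show ?case
    apply (subst reach_prob_regs_heap)
    apply (simp add: symbolic_run del: of_nat_add of_nat_mult of_nat_Suc)
    apply (simp only: halted_restored output_test_def)
    apply (rule arg_cong[where f="\<lambda>b. if b then 1 else 0"])
    apply (rule all_cong)
    apply (simp add: mult_2)
    done
next
  case (Suc i)
  have i: "i \<le> 28" using Suc.prems by simp
  have I: "sampler_prog ! (197 + 3*(28-i)) = Const (Suc i) 1" "sampler_prog ! (198 + 3*(28-i)) = Arith Minus 0 0 (Suc i)"
     "sampler_prog ! (199 + 3*(28-i)) = Load (Suc i) 0"
    using prog_restore[rule_format, of "Suc i"] i by auto
  define m1 where "m1 = m(Suc i := 1)"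
  define m2 where "m2 = m1(0 := m1 0 - m1 (Suc i))"
  define m3 where "m3 = m2(Suc i := m2 (nat \<lfloor>m2 0\<rfloor>))"
  have e: "3 * Suc i + 2 + k = Suc (Suc (Suc (3*i + 2 + k)))" by simp
  have pc: "197 + 3 * (29 - Suc i) = 197 + 3*(28-i)" by simp
  have "V (3 * Suc i + 2 + k) (197 + 3 * (29 - Suc i), m)
      = V (Suc (Suc (3*i + 2 + k))) (Suc (197 + 3*(28-i)), m1)"
    unfolding e pc m1_def using i I by (subst reach_prob_step) (simp_all add: length_sampler_prog)
  also have "\<dots> = V (Suc (3*i + 2 + k)) (Suc (Suc (197 + 3*(28-i))), m2)"
    unfolding m2_def using i I by (subst reach_prob_step) (simp_all add: length_sampler_prog)
  also have "\<dots> = V (3*i + 2 + k) (Suc (Suc (Suc (197 + 3*(28-i)))), m3)"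
    unfolding m3_def using i I by (subst reach_prob_step) (simp_all add: length_sampler_prog)
  also have "Suc (Suc (Suc (197 + 3*(28-i)))) = 197 + 3*(29-i)" using i by simp
  also have "V (3*i + 2 + k) (197 + 3*(29-i), m3) = output_test hh z"
  proof (rule Suc.IH)
    have "m2 0 = real (z + i + 1)" using Suc.prems unfolding m2_def m1_def by simp
    hence "nat \<lfloor>m2 0\<rfloor> = z + i + 1" by simp
    thus "m3 0 = real (z + i + 1)" "\<forall>a\<ge>31. m3 a = hh a" "\<forall>j. i < j \<longrightarrow> j \<le> 30 \<longrightarrow> m3 j = hh (z + j)"
      using Suc.prems unfolding m3_def m2_def m1_def by auto
  qed (use Suc.prems in auto)
  finally show ?case .
qed

lemma restore_all_regs:
  assumes "m 0 = real (z + 30)" "\<forall>a\<ge>31. m a = hh a" "m 30 = hh (z + 30)" "z \<ge> 31"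
  shows "V (89 + k) (197, m) = output_test hh z"
proof -
  have "\<forall>j. 29 < j \<longrightarrow> j \<le> 30 \<longrightarrow> m j = hh (z + j)"
  proof (intro allI impI)
    fix j :: nat assume "29 < j" "j \<le> 30" hence "j = 30" by simp
    thus "m j = hh (z + j)" using assms by simp
  qed
  thus ?thesis using restore_regs[of 29 m z hh k] assms by simp
qed

lemma restore_prelude:
  assumes "m 11 = real z" "z \<ge> 31"
  shows "\<exists>m'. V (8 + K) (189, m) = V K (197, m') \<and> m' 0 = real (z + 30) \<and> m' 30 = m (z + 30)
     \<and> (\<forall>a\<ge>31. m' a = (m(2*z+2 := m z)) a)"
  using assms
  apply (subst reach_prob_regs_heap)
  apply (simp add: symbolic_run del: of_nat_add of_nat_mult of_nat_Suc)
  apply (intro exI conjI)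
  apply (rule refl)
  apply (simp_all add: regs_heap_def reg_upd_def)
  done

lemma restore_correct:
  assumes "m 11 = real z" "z \<ge> 31" "z > n" "\<forall>j<n. m (z + j) = ov j" "\<forall>j. 31 \<le> j \<longrightarrow> j < n \<longrightarrow> m j = ov j"
  shows "V (97 + k) (189, m) = (if \<forall>j<n. ov j = real (w!j) then 1 else 0)"
proof -
  obtain m' where m': "V (8 + (89 + k)) (189, m) = V (89 + k) (197, m')" "m' 0 = real (z + 30)"
     "m' 30 = m (z + 30)" "\<forall>a\<ge>31. m' a = (m(2*z+2 := m z)) a"
    using restore_prelude[of m z "89 + k"] assms by blast
  have "V (97 + k) (189, m) = output_test (m(2*z+2 := m z)) z"
    using m' restore_all_regs[of m' z "m(2*z+2 := m z)" k] assms(2) by simp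
  also have "\<dots> = (if \<forall>j<n. ov j = real (w!j) then 1 else 0)"
    unfolding output_test_def
  proof (rule arg_cong[where f="\<lambda>b. if b then 1 else 0"], rule all_cong)
    fix j assume j: "j < n"
    have "(if j = 0 then (m(2*z+2 := m z)) (2*z+2) else if j \<le> 30 then (m(2*z+2 := m z)) (z + j)
           else (m(2*z+2 := m z)) j) = ov j"
      using assms j by auto
    thus "((if j = 0 then (m(2*z+2 := m z)) (2*z+2) else if j \<le> 30 then (m(2*z+2 := m z)) (z + j)
           else (m(2*z+2 := m z)) j) = real (w!j)) = (ov j = real (w!j))" by simp
  qed
  finally show ?thesis .
qed

definition out_inv :: "nat \<Rightarrow> nat \<Rightarrow> (nat \<Rightarrow> real) \<Rightarrow> (nat \<Rightarrow> real) \<Rightarrow> bool" where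
  "out_inv z i ov m \<longleftrightarrow> m 1 = 1 \<and> m 6 = real n \<and> m 11 = real z \<and> m 12 = real i \<and> m 29 = real (z + i)
     \<and> (\<forall>j<n. m (z + j) = ov j) \<and> (\<forall>j. 31 \<le> j \<longrightarrow> j < i \<longrightarrow> j < n \<longrightarrow> m j = ov j)"

lemma out_exit:
  assumes "out_inv z i ov m" "n \<le> i" "z \<ge> 31" "z > n"
  shows "V (98 + k) (183, m) = (if \<forall>j<n. ov j = real (w!j) then 1 else 0)"
proof -
  have "V (Suc (97 + k)) (183, m) = V (97 + k) (189, m)"
    using assms unfolding out_inv_def by (subst reach_prob_step) (simp_all add: length_sampler_prog sampler_prog_nth)
  also have "\<dots> = (if \<forall>j<n. ov j = real (w!j) then 1 else 0)"
    by (rule restore_correct) (use assms in \<open>auto simp: out_inv_def\<close>)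
  finally show ?thesis by simp
qed

lemma out_step:
  assumes "out_inv z i ov m" "i < n" "31 \<le> i" "z > n"
  shows "\<exists>m'. V (6 + K) (183, m) = V K (183, m') \<and> out_inv z (i+1) ov m'"
  using assms unfolding out_inv_def
  apply (subst reach_prob_regs_heap)
  apply (simp add: symbolic_run del: of_nat_add of_nat_mult of_nat_Suc)
  apply (intro exI conjI)
  apply (rule refl)
  apply (simp_all add: regs_heap_apply)
  apply (auto simp: reg_upd_def less_Suc_eq)
  done

lemma out_loop:
  assumes "out_inv z i ov m" "31 \<le> i" "z \<ge> 31" "z > n"
  shows "V (6 * (n - i) + 98 + k) (183, m) = (if \<forall>j<n. ov j = real (w!j) then 1 else 0)"
  using assms
proof (induction "n - i" arbitrary: i m)
  case 0
  thus ?case using out_exit[of z i ov m k] by simp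
next
  case (Suc d)
  hence i: "i < n" by simp
  obtain m' where m': "V (6 + (6 * (n - (i+1)) + 98 + k)) (183, m) = V (6 * (n - (i+1)) + 98 + k) (183, m')"
     "out_inv z (i+1) ov m'"
    using out_step[OF Suc.prems(1) i Suc.prems(2,4)] by blast
  have e: "6 * (n - i) + 98 + k = 6 + (6 * (n - (i+1)) + 98 + k)" using i by simp
  have "V (6 * (n - i) + 98 + k) (183, m) = V (6 * (n - (i+1)) + 98 + k) (183, m')"
    unfolding e by (rule m'(1))
  also have "\<dots> = (if \<forall>j<n. ov j = real (w!j) then 1 else 0)"
    using Suc.hyps(1)[of "i+1" m'] Suc.hyps(2) m'(2) Suc.prems by simp
  finally show ?case .
qed

subsection \<open>Sampling the coordinates\<close>

text \<open>Registers of the sampling loop: \<open>12\<close> the coordinate \<open>i\<close>, \<open>20\<close> the flag \<open>F\<close>,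
  \<open>21\<close> \<open>\<gamma> = 1 - F T\<^sub>i\<^sub>+\<^sub>1\<close>, \<open>22\<close> the weight \<open>R\<close> not yet offered, \<open>14\<close> the candidate \<open>c\<close>,
  \<open>23\<close> the number \<open>d\<close> of coins that came up heads, \<open>13\<close> the value chosen, \<open>24\<close> whether it was
  chosen as a disagreeing value, \<open>27, 28, 29\<close> pointers into the three tables.\<close>

definition const_regs :: "(nat \<Rightarrow> real) \<Rightarrow> bool" where
  "const_regs m \<longleftrightarrow> m 1 = 1 \<and> m 4 = real q \<and> m 6 = real n \<and> m 7 = real (n*q) \<and> m 9 = real (marg_base n q)
     \<and> m 10 = real (agree_base n q) \<and> m 11 = real (out_base n q)"

definition coord_inv :: "nat \<Rightarrow> real \<Rightarrow> nat \<Rightarrow> real \<Rightarrow> real \<Rightarrow> real \<Rightarrow> real \<Rightarrow> real \<Rightarrow> (nat \<Rightarrow> real)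
    \<Rightarrow> (nat \<Rightarrow> real) \<Rightarrow> bool" where
  "coord_inv i F c d vr g R \<gamma> hh m \<longleftrightarrow> const_regs m \<and> m 12 = real i \<and> m 20 = F \<and> m 21 = \<gamma>
     \<and> m 27 = real (marg_base n q + i*q) \<and> m 28 = real (agree_base n q + i) \<and> m 29 = real (out_base n q + i)
     \<and> m 14 = real c \<and> m 15 = real (marg_base n q + i*q + c) \<and> m 16 = real (marg_base n q + i*q + n*q + c)
     \<and> m 23 = d \<and> m 13 = vr \<and> m 24 = g \<and> m 22 = R \<and> (\<forall>a\<ge>31. m a = hh a)"

definition marg_stored :: "nat \<Rightarrow> (nat \<Rightarrow> real) \<Rightarrow> bool" where
  "marg_stored i hh \<longleftrightarrow> (\<forall>c<q. hh (marg_base n q + i*q + c) = P i c \<and> hh (marg_base n q + i*q + n*q + c) = Q i c)"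

definition tables_stored :: "(nat \<Rightarrow> real) \<Rightarrow> bool" where
  "tables_stored m \<longleftrightarrow> (\<forall>i<n. marg_stored i m) \<and> (\<forall>j\<le>n. m (agree_base n q + j) = agree_prob j)"

definition sample_inv :: "nat \<Rightarrow> real \<Rightarrow> (nat \<Rightarrow> real) \<Rightarrow> bool" where
  "sample_inv i F m \<longleftrightarrow> const_regs m \<and> m 12 = real i \<and> m 20 = F \<and> m 27 = real (marg_base n q + i*q)
     \<and> m 28 = real (agree_base n q + i) \<and> m 29 = real (out_base n q + i) \<and> tables_stored m"

definition coord_step_post where
  "coord_step_post i F c d vr g R \<gamma> hh x1 x2 x3 m11 m10 m01 m00 \<longleftrightarrow>
      x1 = (1 - d) * (agree_wt \<gamma> i c / R) \<and> x2 = (1 - (d + 1)) * (split_wt i c / (R - agree_wt \<gamma> i c))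
    \<and> x3 = (1 - d) * (split_wt i c / (R - agree_wt \<gamma> i c))
    \<and> coord_inv i F (c+1) (d+2) (vr + 2 * real c) (g+1) (R - agree_wt \<gamma> i c - split_wt i c) \<gamma> hh m11
    \<and> coord_inv i F (c+1) (d+1) (vr + real c) g (R - agree_wt \<gamma> i c - split_wt i c) \<gamma> hh m10
    \<and> coord_inv i F (c+1) (d+1) (vr + real c) (g+1) (R - agree_wt \<gamma> i c - split_wt i c) \<gamma> hh m01
    \<and> coord_inv i F (c+1) d vr g (R - agree_wt \<gamma> i c - split_wt i c) \<gamma> hh m00"

lemma coord_step:
  assumes "coord_inv i F c d vr g R \<gamma> hh m" "c < q" "marg_stored i hh"
  shows "\<exists>x1 x2 x3 m11 m10 m01 m00. V (29 + K) (142, m) =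
      flip_mix x1 (flip_mix x2 (V K (142, m11)) (V K (142, m10))) (flip_mix x3 (V K (142, m01)) (V K (142, m00)))
      \<and> coord_step_post i F c d vr g R \<gamma> hh x1 x2 x3 m11 m10 m01 m00"
proof -
  have dp: "marg_base n q \<ge> 32" by (rule marg_base_ge)
  show ?thesis
  proof (cases "P i c \<le> Q i c")
    case True
    show ?thesis
      using assms True dp unfolding coord_inv_def const_regs_def marg_stored_def
      apply (subst reach_prob_regs_heap)
      apply (simp add: symbolic_run del: of_nat_add of_nat_mult of_nat_Suc)
      apply (intro exI conjI)
       apply (rule refl)
      apply (simp add: coord_step_post_def coord_inv_def const_regs_def regs_heap_apply ovl_def)
      done
  next
    case False
    show ?thesis
      using assms False dp unfolding coord_inv_def const_regs_def marg_stored_def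
      apply (subst reach_prob_regs_heap)
      apply (simp add: symbolic_run del: of_nat_add of_nat_mult of_nat_Suc)
      apply (intro exI conjI)
       apply (rule refl)
      apply (simp add: coord_step_post_def coord_inv_def const_regs_def regs_heap_apply ovl_def)
      done
  qed
qed

lemma coord_loop_chosen:
  assumes hd: "marg_stored i hh"
    and Hc: "\<And>v g R' m' K. v < q \<Longrightarrow> g = 1 \<or> (g = 0 \<and> \<gamma> > 0) \<Longrightarrow>
               coord_inv i F q 1 (real v) g R' \<gamma> hh m' \<Longrightarrow> V (tA + K) (173, m') = H v g"
    and v: "v < q" and g: "g = 1 \<or> (g = 0 \<and> \<gamma> > 0)"
  shows "c \<le> q \<Longrightarrow> coord_inv i F c 1 (real v) g R \<gamma> hh m \<Longrightarrow>
    V (29 * (q - c) + 1 + tA + K) (142, m) = H v g"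
proof (induction "q - c" arbitrary: c R m)
  case 0
  then have c: "c = q" by simp
  have "V (29 * (q - c) + 1 + tA + K) (142, m) = V (tA + K) (173, m)"
    using 0 c unfolding coord_inv_def const_regs_def
    by (simp add: reach_prob_step length_sampler_prog sampler_prog_nth)
  then show ?case using Hc[OF v g] 0 c by simp
next
  case (Suc x)
  then have c: "c < q" by simp
  define K' where "K' = 29 * (q - Suc c) + 1 + tA + K"
  obtain x1 x2 x3 m11 m10 m01 m00 where
    run: "V (29 + K') (142, m) = flip_mix x1 (flip_mix x2 (V K' (142, m11)) (V K' (142, m10)))
            (flip_mix x3 (V K' (142, m01)) (V K' (142, m00)))"
    and post: "coord_step_post i F c 1 (real v) g R \<gamma> hh x1 x2 x3 m11 m10 m01 m00"
    using coord_step[OF Suc.prems(2) c hd, of K'] by blast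
  have IH: "\<And>R m. coord_inv i F (Suc c) 1 (real v) g R \<gamma> hh m \<Longrightarrow> V K' (142, m) = H v g"
    using Suc.hyps(1)[of "Suc c"] Suc.hyps(2) c unfolding K'_def by simp
  have time: "29 * (q - c) + 1 + tA + K = 29 + K'" unfolding K'_def using c by simp
  have "x1 = 0" "x3 = 0" using post unfolding coord_step_post_def by auto
  moreover have "V K' (142, m00) = H v g"
    by (rule IH[of "R - agree_wt \<gamma> i c - split_wt i c"]) (use post in \<open>simp add: coord_step_post_def\<close>)
  ultimately show ?case unfolding time run by (simp add: flip_mix_0)
qed

lemma coord_loop:
  assumes hd: "marg_stored i hh" and i: "i < n" and gam: "0 \<le> \<gamma>"
    and Hc: "\<And>v g R' m' K. v < q \<Longrightarrow> g = 1 \<or> (g = 0 \<and> \<gamma> > 0) \<Longrightarrow>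
               coord_inv i F q 1 (real v) g R' \<gamma> hh m' \<Longrightarrow> V (tA + K) (173, m') = H v g"
  shows "c \<le> q \<Longrightarrow> coord_inv i F c 0 0 0 R \<gamma> hh m \<Longrightarrow>
    R = (\<Sum>c'\<in>{c..<q}. agree_wt \<gamma> i c' + split_wt i c') \<Longrightarrow> R > 0 \<Longrightarrow>
    V (29 * (q - c) + 1 + tA + K) (142, m) = (\<Sum>c'\<in>{c..<q}. agree_wt \<gamma> i c' * H c' 0 + split_wt i c' * H c' 1) / R"
proof (induction "q - c" arbitrary: c R m)
  case 0
  then show ?case by simp
next
  case (Suc x)
  then have c: "c < q" by simp
  define K' where "K' = 29 * (q - Suc c) + 1 + tA + K"
  obtain x1 x2 x3 m11 m10 m01 m00 where
    run: "V (29 + K') (142, m) = flip_mix x1 (flip_mix x2 (V K' (142, m11)) (V K' (142, m10)))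
            (flip_mix x3 (V K' (142, m01)) (V K' (142, m00)))"
    and post: "coord_step_post i F c 0 0 0 R \<gamma> hh x1 x2 x3 m11 m10 m01 m00"
    using coord_step[OF Suc.prems(2) c hd, of K'] by blast
  define a where "a = agree_wt \<gamma> i c"
  define b where "b = split_wt i c"
  define R' where "R' = (\<Sum>c'\<in>{Suc c..<q}. agree_wt \<gamma> i c' + split_wt i c')"
  define S where "S = (\<Sum>c'\<in>{Suc c..<q}. agree_wt \<gamma> i c' * H c' 0 + split_wt i c' * H c' 1)"
  have nn: "\<forall>c'\<in>{Suc c..<q}. 0 \<le> agree_wt \<gamma> i c' \<and> 0 \<le> split_wt i c'"
    using gam i ovl_nonneg split_wt_nonneg by auto
  have a0: "0 \<le> a" unfolding a_def using gam i c ovl_nonneg by auto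
  have b0: "0 \<le> b" unfolding b_def by (rule split_wt_nonneg)
  have R'0: "0 \<le> R'" unfolding R'_def using nn by (intro sum_nonneg) auto
  have R: "R = a + b + R'"
    using Suc.prems(3) c unfolding a_def b_def R'_def by (simp add: sum.atLeast_Suc_lessThan)
  have chosen: "V K' (142, m') = H c g"
    if "g = 1 \<or> (g = 0 \<and> \<gamma> > 0)" "coord_inv i F (Suc c) 1 (real c) g R'' \<gamma> hh m'" for g R'' m'
    using coord_loop_chosen[OF hd Hc c that(1), where c = "Suc c"] that(2) c unfolding K'_def by simp
  have X10: "a * V K' (142, m10) = a * H c 0"
  proof (cases "\<gamma> > 0")
    case True
    then show ?thesis using chosen[of 0 "R - agree_wt \<gamma> i c - split_wt i c" m10] post unfolding coord_step_post_def by simp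
  next
    case False
    then show ?thesis using gam unfolding a_def by simp
  qed
  have X01: "V K' (142, m01) = H c 1"
    using chosen[of 1 "R - agree_wt \<gamma> i c - split_wt i c" m01] post unfolding coord_step_post_def by simp
  have X00: "V K' (142, m00) = S / R'" if "R' > 0"
  proof -
    have "coord_inv i F (Suc c) 0 0 0 R' \<gamma> hh m00"
      using post R unfolding coord_step_post_def a_def b_def by simp
    then show ?thesis
      using Suc.hyps(1)[of "Suc c" R' m00] Suc.hyps(2) c that unfolding K'_def R'_def S_def by simp
  qed
  have S0: "S = 0" if "R' = 0"
    unfolding S_def by (rule sum_zero_weights) (use nn that in \<open>auto simp: R'_def\<close>)
  have time: "29 * (q - c) + 1 + tA + K = 29 + K'" unfolding K'_def using c by simp
  have "V (29 * (q - c) + 1 + tA + K) (142, m)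
      = flip_mix (a / R) (V K' (142, m10)) (flip_mix (b / (R - a)) (V K' (142, m01)) (V K' (142, m00)))"
    unfolding time run using post unfolding coord_step_post_def a_def b_def by (simp add: flip_mix_0)
  also have "\<dots> = (a * H c 0 + b * H c 1 + S) / R"
    by (rule flip_mix_two_stage[OF a0 b0 R'0 R]) (use Suc.prems(4) X10 X01 X00 S0 in auto)
  also have "a * H c 0 + b * H c 1 + S = (\<Sum>c'\<in>{c..<q}. agree_wt \<gamma> i c' * H c' 0 + split_wt i c' * H c' 1)"
    unfolding a_def b_def S_def using c by (simp add: sum.atLeast_Suc_lessThan)
  finally show ?case .
qed

lemma sample_enter:
  assumes "sample_inv i F m" "i < n"
  shows "\<exists>m'. V (14 + K) (128, m) = V K (142, m') \<and> coord_inv i F 0 0 0 0 (1 - F * agree_prob i) (1 - F * agree_prob (i+1)) m m'"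
proof -
  have t: "agree_base n q \<ge> 32" by (rule agree_base_ge)
  have hT: "\<forall>j\<le>n. m (agree_base n q + j) = agree_prob j" using assms unfolding sample_inv_def tables_stored_def by auto
  have T: "m (agree_base n q + i) = agree_prob i" "m (agree_base n q + i + 1) = agree_prob (i + 1)"
    using hT[rule_format, of i] hT[rule_format, of "i+1"] assms(2) by auto
  show ?thesis
    using assms t T unfolding sample_inv_def const_regs_def
    apply (subst reach_prob_regs_heap)
    apply (simp add: symbolic_run del: of_nat_add of_nat_mult of_nat_Suc)
    apply (intro exI conjI)
     apply (rule refl)
    apply (simp add: coord_inv_def const_regs_def regs_heap_apply)
    done
qed

lemma sample_next:
  assumes "coord_inv i F q 1 (real v) g R' \<gamma> hh m'"
  shows "\<exists>m''. V (8 + K) (173, m') = V K (128, m'') \<and> const_regs m'' \<and> m'' 12 = real (i+1) \<and> m'' 20 = F - F * g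
     \<and> m'' 27 = real (marg_base n q + (i+1)*q) \<and> m'' 28 = real (agree_base n q + (i+1)) \<and> m'' 29 = real (out_base n q + (i+1))
     \<and> (\<forall>a\<ge>31. m'' a = (hh(out_base n q + i := real v)) a)"
proof -
  have t: "out_base n q \<ge> 32" by (rule out_base_ge)
  show ?thesis
    using assms t unfolding coord_inv_def const_regs_def
    apply (subst reach_prob_regs_heap)
    apply (simp add: symbolic_run del: of_nat_add of_nat_mult of_nat_Suc)
    apply (intro exI conjI)
     apply (rule refl)
    apply (simp_all add: regs_heap_apply algebra_simps)
    done
qed

lemma sample_exit:
  assumes "sample_inv n F m"
  shows "\<exists>m'. V (3 + K) (128, m) = V K (183, m') \<and> out_inv (out_base n q) 31 (\<lambda>j. m (out_base n q + j)) m'"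
proof -
  have t: "out_base n q \<ge> 32" by (rule out_base_ge)
  show ?thesis
    using assms t unfolding sample_inv_def const_regs_def
    apply (subst reach_prob_regs_heap)
    apply (simp add: symbolic_run del: of_nat_add of_nat_mult of_nat_Suc)
    apply (intro exI conjI)
     apply (rule refl)
    apply (simp add: out_inv_def regs_heap_apply)
    done
qed

lemma tables_stored_upd_out:
  assumes "tables_stored h" "\<forall>a\<ge>31. h' a = (h(out_base n q + i := x)) a"
  shows "tables_stored h'"
  unfolding tables_stored_def marg_stored_def
proof (intro conjI allI impI)
  fix i' c assume a: "i' < n" "c < q"
  have d: "marg_base n q \<ge> 32" by (rule marg_base_ge)
  have l: "marg_base n q + i' * q + c < out_base n q" "marg_base n q + i' * q + n * q + c < out_base n q"
    using marg_addr_lt[OF a] unfolding out_base_def by auto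
  show "h' (marg_base n q + i' * q + c) = P i' c" "h' (marg_base n q + i' * q + n * q + c) = Q i' c"
    using assms a d l unfolding tables_stored_def marg_stored_def by auto
next
  fix j assume j: "j \<le> n"
  have t: "agree_base n q \<ge> 32" by (rule agree_base_ge)
  have "agree_base n q + j < out_base n q" using j unfolding out_base_def by simp
  thus "h' (agree_base n q + j) = agree_prob j" using assms j t unfolding tables_stored_def by auto
qed

definition sample_time :: "nat \<Rightarrow> nat" where "sample_time i = (n - i) * (29 * q + 23) + 6 * (n - 31) + 101"

lemma sample_finish:
  assumes "sample_inv n F m" "F = 0 \<or> F = 1" "1 - F * agree_prob n > 0"
  shows "V (sample_time n + k) (128, m) = success_prob n F (\<lambda>j. m (out_base n q + j))"
proof -
  have F0: "F = 0" using assms(2,3) agree_prob_n by auto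
  obtain m' where m': "V (3 + (6 * (n - 31) + 98 + k)) (128, m) = V (6 * (n - 31) + 98 + k) (183, m')"
    "out_inv (out_base n q) 31 (\<lambda>j. m (out_base n q + j)) m'"
    using sample_exit[OF assms(1)] by blast
  have "V (sample_time n + k) (128, m) = V (3 + (6 * (n - 31) + 98 + k)) (128, m)"
    by (simp add: sample_time_def ac_simps)
  also have "\<dots> = (if \<forall>j<n. m (out_base n q + j) = real (w ! j) then 1 else 0)"
    unfolding m'(1) by (rule out_loop[OF m'(2)]) (use out_base_ge out_base_gt in auto)
  also have "\<dots> = success_prob n F (\<lambda>j. m (out_base n q + j))"
    unfolding success_prob_def F0 P_tail_def ovl_tail_def by simp
  finally show ?thesis .
qed

lemma sample_after_coord:
  assumes later: "\<And>F' m' k. F' = 0 \<or> F' = 1 \<Longrightarrow> 1 - F' * agree_prob (Suc i) > 0 \<Longrightarrow> sample_inv (Suc i) F' m' \<Longrightarrow>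
      V (sample_time (Suc i) + k) (128, m') = success_prob (Suc i) F' (\<lambda>j. m' (out_base n q + j))"
    and ts: "tables_stored m" and F: "F = 0 \<or> F = 1"
    and g: "g = 1 \<or> (g = 0 \<and> 1 - F * agree_prob (Suc i) > 0)"
    and m': "coord_inv i F q 1 (real v) g R' (1 - F * agree_prob (Suc i)) m m'"
  shows "V (8 + sample_time (Suc i) + K) (173, m')
      = success_prob (Suc i) (F - F * g) (\<lambda>j. if j = i then real v else m (out_base n q + j))"
proof -
  obtain m'' where m'': "V (8 + (sample_time (Suc i) + K)) (173, m') = V (sample_time (Suc i) + K) (128, m'')"
    "const_regs m''" "m'' 12 = real (i + 1)" "m'' 20 = F - F * g"
    "m'' 27 = real (marg_base n q + (i + 1) * q)" "m'' 28 = real (agree_base n q + (i + 1))"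
    "m'' 29 = real (out_base n q + (i + 1))" "\<forall>a\<ge>31. m'' a = (m(out_base n q + i := real v)) a"
    using sample_next[OF m'] by blast
  have inv: "sample_inv (Suc i) (F - F * g) m''"
    unfolding sample_inv_def using m'' tables_stored_upd_out[OF ts m''(8)] by simp
  have "V (8 + sample_time (Suc i) + K) (173, m') = success_prob (Suc i) (F - F * g) (\<lambda>j. m'' (out_base n q + j))"
    using m''(1) later[OF _ _ inv] F g by (auto simp: add.assoc)
  also have "\<dots> = success_prob (Suc i) (F - F * g) (\<lambda>j. if j = i then real v else m (out_base n q + j))"
    using m''(8) out_base_ge by (intro success_prob_cong) auto
  finally show ?thesis .
qed

lemma sample_coord:
  assumes i: "i < n" and F: "F = 0 \<or> F = 1" and pos: "1 - F * agree_prob i > 0" and inv: "sample_inv i F m"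
    and later: "\<And>F' m' k. F' = 0 \<or> F' = 1 \<Longrightarrow> 1 - F' * agree_prob (Suc i) > 0 \<Longrightarrow> sample_inv (Suc i) F' m' \<Longrightarrow>
      V (sample_time (Suc i) + k) (128, m') = success_prob (Suc i) F' (\<lambda>j. m' (out_base n q + j))"
  shows "V (sample_time i + k) (128, m) = success_prob i F (\<lambda>j. m (out_base n q + j))"
proof -
  define \<gamma> where "\<gamma> = 1 - F * agree_prob (Suc i)"
  define R where "R = 1 - F * agree_prob i"
  define tA where "tA = 8 + sample_time (Suc i)"
  define H where "H = (\<lambda>v g. success_prob (Suc i) (F - F * g) (\<lambda>j. if j = i then real v else m (out_base n q + j)))"
  have ts: "tables_stored m" using inv unfolding sample_inv_def by simp
  have hd: "marg_stored i m" using ts i unfolding tables_stored_def by simp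
  have gam: "0 \<le> \<gamma>" unfolding \<gamma>_def using F agree_prob_bounds[of "Suc i"] by auto
  obtain m1 where m1: "V (14 + (29 * (q - 0) + 1 + tA + k)) (128, m) = V (29 * (q - 0) + 1 + tA + k) (142, m1)"
    "coord_inv i F 0 0 0 0 R \<gamma> m m1"
    using sample_enter[OF inv i, of "29 * (q - 0) + 1 + tA + k"] unfolding R_def \<gamma>_def Suc_eq_plus1 by blast
  have Hc: "V (tA + K) (173, m') = H v g"
    if "g = 1 \<or> (g = 0 \<and> \<gamma> > 0)" "coord_inv i F q 1 (real v) g R' \<gamma> m m'" for v g R' m' K
    using sample_after_coord[OF later ts F] that unfolding tA_def H_def \<gamma>_def by simp
  have R: "R = (\<Sum>c'\<in>{0..<q}. agree_wt \<gamma> i c' + split_wt i c')"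
    unfolding R_def \<gamma>_def using sum_coord_weights[OF i, of F] by simp
  have "V (sample_time i + k) (128, m) = V (14 + (29 * (q - 0) + 1 + tA + k)) (128, m)"
    using i by (simp add: sample_time_def tA_def Suc_diff_Suc[symmetric] ac_simps)
  also have "\<dots> = (\<Sum>c'\<in>{0..<q}. agree_wt \<gamma> i c' * H c' 0 + split_wt i c' * H c' 1) / R"
    unfolding m1(1) by (rule coord_loop[OF hd i gam Hc _ m1(2) R]) (use pos in \<open>auto simp: R_def\<close>)
  also have "\<dots> = success_prob i F (\<lambda>j. m (out_base n q + j))"
    unfolding H_def \<gamma>_def R_def using success_prob_step[OF i F pos] by simp
  finally show ?thesis .
qed

lemma sample_loop:
  "i \<le> n \<Longrightarrow> F = 0 \<or> F = 1 \<Longrightarrow> 1 - F * agree_prob i > 0 \<Longrightarrow> sample_inv i F m \<Longrightarrow>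
   V (sample_time i + k) (128, m) = success_prob i F (\<lambda>j. m (out_base n q + j))"
proof (induction "n - i" arbitrary: i F m k)
  case 0
  then show ?case using sample_finish[of F m k] by simp
next
  case (Suc x)
  then have i: "i < n" by simp
  show ?case
    by (rule sample_coord[OF i Suc.prems(2-4)]) (use Suc.hyps i in auto)
qed

subsection \<open>The table of agreement probabilities\<close>

definition ovl_inv :: "nat \<Rightarrow> nat \<Rightarrow> real \<Rightarrow> (nat \<Rightarrow> real) \<Rightarrow> (nat \<Rightarrow> real) \<Rightarrow> bool" where
  "ovl_inv j c S hh m \<longleftrightarrow> const_regs m \<and> m 12 = real (Suc j) \<and> m 27 = real (marg_base n q + j*q) \<and> m 28 = real (agree_base n q + j)
     \<and> m 13 = S \<and> m 14 = real c \<and> m 15 = real (marg_base n q + j*q + c) \<and> m 16 = real (marg_base n q + j*q + n*q + c)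
     \<and> (\<forall>a\<ge>31. m a = hh a)"

lemma ovl_step:
  assumes "ovl_inv j c S hh m" "c < q" "marg_stored j hh"
  shows "\<exists>m'. V (11 + K) (104, m) = V K (104, m') \<and> ovl_inv j (c+1) (S + ovl j c) hh m'"
proof -
  have dp: "marg_base n q \<ge> 32" by (rule marg_base_ge)
  show ?thesis
  proof (cases "P j c \<le> Q j c")
    case True
    show ?thesis
      using assms True dp unfolding ovl_inv_def const_regs_def marg_stored_def
      apply (subst reach_prob_regs_heap)
      apply (simp add: symbolic_run del: of_nat_add of_nat_mult of_nat_Suc)
      apply (intro exI conjI)
       apply (rule refl)
      apply (simp_all add: regs_heap_apply ovl_def)
      done
  next
    case False
    show ?thesis
      using assms False dp unfolding ovl_inv_def const_regs_def marg_stored_def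
      apply (subst reach_prob_regs_heap)
      apply (simp add: symbolic_run del: of_nat_add of_nat_mult of_nat_Suc)
      apply (intro exI conjI)
       apply (rule refl)
      apply (simp_all add: regs_heap_apply ovl_def)
      done
  qed
qed

lemma ovl_loop:
  assumes "marg_stored j hh"
  shows "c \<le> q \<Longrightarrow> ovl_inv j c S hh m \<Longrightarrow>
    \<exists>m'. V (11 * (q - c) + 1 + K) (104, m) = V K (117, m') \<and> ovl_inv j q (S + (\<Sum>c'\<in>{c..<q}. ovl j c')) hh m'"
proof (induction "q - c" arbitrary: c S m)
  case 0
  hence c: "c = q" by simp
  have "V (11 * (q - c) + 1 + K) (104, m) = V K (117, m)"
    using 0 c unfolding ovl_inv_def const_regs_def by (simp add: reach_prob_step length_sampler_prog sampler_prog_nth)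
  thus ?case using 0 c by auto
next
  case (Suc x)
  hence c: "c < q" by simp
  obtain m1 where m1: "V (11 + (11 * (q - Suc c) + 1 + K)) (104, m) = V (11 * (q - Suc c) + 1 + K) (104, m1)"
    "ovl_inv j (c+1) (S + ovl j c) hh m1"
    using ovl_step[OF Suc.prems(2) c assms] by blast
  obtain m' where m': "V (11 * (q - Suc c) + 1 + K) (104, m1) = V K (117, m')"
      "ovl_inv j q (S + ovl j c + (\<Sum>c'\<in>{Suc c..<q}. ovl j c')) hh m'"
  proof -
    have x: "x = q - Suc c" using Suc.hyps(2) by simp
    have "Suc c \<le> q" using c by simp
    from Suc.hyps(1)[OF x this] m1(2) show ?thesis using that by auto
  qed
  have e: "11 * (q - c) + 1 + K = 11 + (11 * (q - Suc c) + 1 + K)" using c by simp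
  have s: "S + ovl j c + (\<Sum>c'\<in>{Suc c..<q}. ovl j c') = S + (\<Sum>c'\<in>{c..<q}. ovl j c')"
    using c by (simp add: sum.atLeast_Suc_lessThan)
  have "V (11 * (q - c) + 1 + K) (104, m) = V K (117, m')" unfolding e m1(1) m'(1) ..
  thus ?case using m'(2) unfolding s by blast
qed

definition table_inv :: "nat \<Rightarrow> (nat \<Rightarrow> real) \<Rightarrow> bool" where
  "table_inv j m \<longleftrightarrow> const_regs m \<and> m 12 = real j \<and> m 27 = real (marg_base n q + j*q) \<and> m 28 = real (agree_base n q + j)
     \<and> (\<forall>i<n. marg_stored i m) \<and> (\<forall>j'. j \<le> j' \<longrightarrow> j' \<le> n \<longrightarrow> m (agree_base n q + j') = agree_prob j')"

lemma table_enter: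
  assumes "const_regs m" "m 12 = real (Suc j)" "m 27 = real (marg_base n q + j*q + q)" "m 28 = real (agree_base n q + Suc j)"
  shows "\<exists>m'. V (7 + K) (96, m) = V K (104, m') \<and> ovl_inv j 0 0 m m'"
  using assms unfolding const_regs_def
  apply (subst reach_prob_regs_heap)
  apply (simp add: symbolic_run real_of_nat_add_diff_cancel del: of_nat_add of_nat_mult of_nat_Suc)
  apply (intro exI conjI)
   apply (rule refl)
  apply (simp add: ovl_inv_def const_regs_def regs_heap_apply)
  done

lemma table_next:
  assumes "ovl_inv j q S hh m" "hh (agree_base n q + Suc j) = T"
  shows "\<exists>m'. V (6 + K) (117, m) = V K (96, m') \<and> const_regs m' \<and> m' 12 = real j \<and> m' 27 = real (marg_base n q + j*q)
     \<and> m' 28 = real (agree_base n q + j) \<and> (\<forall>a\<ge>31. m' a = (hh(agree_base n q + j := T * S)) a)"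
proof -
  have t: "agree_base n q \<ge> 32" by (rule agree_base_ge)
  show ?thesis
    using assms t unfolding ovl_inv_def const_regs_def
    apply (subst reach_prob_regs_heap)
    apply (simp add: symbolic_run del: of_nat_add of_nat_mult of_nat_Suc)
    apply (intro exI conjI)
     apply (rule refl)
    apply (simp_all add: regs_heap_apply)
    done
qed

lemma tables_stored_cong:
  assumes "tables_stored h" "\<forall>a\<ge>31. h' a = h a"
  shows "tables_stored h'"
proof -
  have d: "marg_base n q \<ge> 32" "agree_base n q \<ge> 32" by (rule marg_base_ge, rule agree_base_ge)
  show ?thesis using assms d unfolding tables_stored_def marg_stored_def by auto
qed

lemma table_exit_regs:
  assumes "const_regs m" "m 12 = 0"
  shows "\<exists>m'. V (7 + K) (96, m) = V K (128, m') \<and> const_regs m' \<and> m' 12 = real 0 \<and> m' 20 = 1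
     \<and> m' 27 = real (marg_base n q + 0*q) \<and> m' 28 = real (agree_base n q + 0) \<and> m' 29 = real (out_base n q + 0) \<and> (\<forall>a\<ge>31. m' a = m a)"
  using assms unfolding const_regs_def
  apply (subst reach_prob_regs_heap)
  apply (simp add: symbolic_run del: of_nat_add of_nat_mult of_nat_Suc)
  apply (intro exI conjI)
   apply (rule refl)
  apply (simp_all add: regs_heap_apply)
  done

lemma table_exit:
  assumes "table_inv 0 m"
  shows "\<exists>m'. V (7 + K) (96, m) = V K (128, m') \<and> sample_inv 0 1 m'"
proof -
  have "const_regs m" "m 12 = 0" using assms unfolding table_inv_def by auto
  then obtain m' where m': "V (7 + K) (96, m) = V K (128, m')" "const_regs m'" "m' 12 = real 0" "m' 20 = 1"
     "m' 27 = real (marg_base n q + 0*q)" "m' 28 = real (agree_base n q + 0)" "m' 29 = real (out_base n q + 0)" "\<forall>a\<ge>31. m' a = m a"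
    using table_exit_regs by blast
  have "tables_stored m" using assms unfolding table_inv_def tables_stored_def by auto
  hence "tables_stored m'" using tables_stored_cong m'(8) by blast
  thus ?thesis using m' unfolding sample_inv_def by blast
qed

lemma marg_stored_upd_agree:
  assumes "marg_stored i h" "i < n" "\<forall>a\<ge>31. h' a = (h(agree_base n q + j := x)) a"
  shows "marg_stored i h'"
  unfolding marg_stored_def
proof (intro allI impI)
  fix c assume c: "c < q"
  have d: "marg_base n q \<ge> 32" by (rule marg_base_ge)
  have l: "marg_base n q + i * q + c < agree_base n q" "marg_base n q + i * q + n * q + c < agree_base n q"
    using marg_addr_lt[OF assms(2) c] by auto
  show "h' (marg_base n q + i * q + c) = P i c \<and> h' (marg_base n q + i * q + n * q + c) = Q i c"
    using assms c d l unfolding marg_stored_def by auto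
qed

lemma table_step:
  assumes j: "j < n" and inv: "table_inv (Suc j) m"
  shows "\<exists>m'. V (11 * q + 14 + K) (96, m) = V K (96, m') \<and> table_inv j m'"
proof -
  have I: "const_regs m" "m 12 = real (Suc j)" "m 27 = real (marg_base n q + j * q + q)"
    "m 28 = real (agree_base n q + Suc j)" "\<forall>i<n. marg_stored i m"
    "\<forall>j'. Suc j \<le> j' \<longrightarrow> j' \<le> n \<longrightarrow> m (agree_base n q + j') = agree_prob j'"
    using inv unfolding table_inv_def by (auto simp: algebra_simps)
  obtain m1 where m1: "V (7 + (11 * (q - 0) + 1 + (6 + K))) (96, m) = V (11 * (q - 0) + 1 + (6 + K)) (104, m1)"
    "ovl_inv j 0 0 m m1"
    using table_enter[OF I(1-4)] by blast
  have hd: "marg_stored j m" using I(5) j by simp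
  obtain m2 where m2: "V (11 * (q - 0) + 1 + (6 + K)) (104, m1) = V (6 + K) (117, m2)"
    "ovl_inv j q (0 + (\<Sum>c'\<in>{0..<q}. ovl j c')) m m2"
    using ovl_loop[OF hd, of 0 0 m1 "6 + K"] m1(2) by auto
  have T1: "m (agree_base n q + Suc j) = agree_prob (Suc j)" using I(6)[rule_format, of "Suc j"] j by simp
  obtain m3 where m3: "V (6 + K) (117, m2) = V K (96, m3)" "const_regs m3" "m3 12 = real j"
     "m3 27 = real (marg_base n q + j * q)" "m3 28 = real (agree_base n q + j)"
     "\<forall>a\<ge>31. m3 a = (m(agree_base n q + j := agree_prob (Suc j) * (0 + (\<Sum>c'\<in>{0..<q}. ovl j c')))) a"
    using table_next[OF m2(2) T1] by blast
  have "table_inv j m3"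
    unfolding table_inv_def
  proof (intro conjI allI impI)
    show "const_regs m3" "m3 12 = real j" "m3 27 = real (marg_base n q + j * q)"
      "m3 28 = real (agree_base n q + j)" by fact+
  next
    fix i assume "i < n"
    then show "marg_stored i m3" using marg_stored_upd_agree[OF _ _ m3(6)] I(5) by blast
  next
    fix j' assume "j \<le> j'" "j' \<le> n"
    then show "m3 (agree_base n q + j') = agree_prob j'"
      using m3(6) agree_base_ge I(6) agree_prob_step[OF j] unfolding ovl_mass_def
      by (cases "j' = j") (auto simp: atLeast0LessThan mult.commute)
  qed
  moreover have "V (11 * q + 14 + K) (96, m) = V (7 + (11 * (q - 0) + 1 + (6 + K))) (96, m)"
    by (simp add: ac_simps)
  then have "V (11 * q + 14 + K) (96, m) = V K (96, m3)"
    unfolding m1(1) m2(1) m3(1) .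
  ultimately show ?thesis by blast
qed

lemma table_loop:
  assumes T0: "agree_prob 0 < 1"
  shows "j \<le> n \<Longrightarrow> table_inv j m \<Longrightarrow> V (j * (11 * q + 14) + 7 + sample_time 0 + k) (96, m) = success_prob 0 1 (\<lambda>_. 0)"
proof (induction j arbitrary: m)
  case 0
  obtain m' where m': "V (7 + (sample_time 0 + k)) (96, m) = V (sample_time 0 + k) (128, m')" "sample_inv 0 1 m'"
    using table_exit[OF 0(2)] by blast
  have "V (0 * (11 * q + 14) + 7 + sample_time 0 + k) (96, m) = V (sample_time 0 + k) (128, m')"
    using m'(1) by (simp add: add.assoc)
  also have "\<dots> = success_prob 0 1 (\<lambda>j. m' (out_base n q + j))"
    by (rule sample_loop) (use m'(2) T0 in auto)
  also have "\<dots> = success_prob 0 1 (\<lambda>_. 0)" by (rule success_prob_cong) simp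
  finally show ?case .
next
  case (Suc j)
  then have j: "j < n" by simp
  obtain m' where "V (11 * q + 14 + (j * (11 * q + 14) + 7 + sample_time 0 + k)) (96, m)
      = V (j * (11 * q + 14) + 7 + sample_time 0 + k) (96, m')" "table_inv j m'"
    using table_step[OF j Suc.prems(2)] by blast
  then show ?case using Suc.IH j by (simp add: algebra_simps)
qed

lemma prog_save:
  "\<forall>j\<in>{2..<31::nat}. sampler_prog ! (10 + 2 * (j - 2)) = Store 0 j \<and> sampler_prog ! (11 + 2 * (j - 2)) = Arith Plus 0 0 1"
  by (simp add: sampler_prog_nth atLeastLessThan_nat_numeral)

definition save_inv :: "nat \<Rightarrow> nat \<Rightarrow> (nat \<Rightarrow> real) \<Rightarrow> (nat \<Rightarrow> real) \<Rightarrow> bool" where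
  "save_inv B j M m \<longleftrightarrow> m 0 = real (B + j) \<and> m 1 = 1 \<and> (\<forall>x. j \<le> x \<longrightarrow> x < 31 \<longrightarrow> m x = M x)
     \<and> (\<forall>x. 2 \<le> x \<longrightarrow> x < j \<longrightarrow> m (B + x) = M x) \<and> (\<forall>x. 31 \<le> x \<longrightarrow> x < B \<longrightarrow> m x = M x) \<and> m B = real q"

lemma save_loop:
  assumes "B \<ge> 32"
  shows "2 \<le> j \<Longrightarrow> j \<le> 31 \<Longrightarrow> save_inv B j M m \<Longrightarrow>
    \<exists>m'. V (2 * (31 - j) + K) (10 + 2 * (j - 2), m) = V K (68, m') \<and> save_inv B 31 M m'"
proof (induction "31 - j" arbitrary: j m)
  case 0
  hence "j = 31" by simp
  thus ?case using 0 by auto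
next
  case (Suc x)
  hence j: "j < 31" by simp
  have I: "sampler_prog ! (10 + 2*(j-2)) = Store 0 j" "sampler_prog ! (11 + 2*(j-2)) = Arith Plus 0 0 1"
    using prog_save[rule_format, of j] j Suc.prems by auto
  define m1 where "m1 = m(nat \<lfloor>m 0\<rfloor> := m j)"
  define m2 where "m2 = m1(0 := m1 0 + m1 1)"
  have pc: "Suc (Suc (10 + 2 * (j - 2))) = 10 + 2 * (Suc j - 2)" using Suc.prems by simp
  have e: "2 * (31 - j) + K = Suc (Suc (2 * (31 - Suc j) + K))" using j by simp
  have "V (2 * (31 - j) + K) (10 + 2 * (j - 2), m) = V (Suc (2 * (31 - Suc j) + K)) (Suc (10 + 2 * (j - 2)), m1)"
    unfolding e m1_def using j I by (subst reach_prob_step) (simp_all add: length_sampler_prog)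
  also have "\<dots> = V (2 * (31 - Suc j) + K) (Suc (Suc (10 + 2 * (j - 2))), m2)"
    unfolding m2_def using j I by (subst reach_prob_step) (simp_all add: length_sampler_prog)
  also have "Suc (Suc (10 + 2 * (j - 2))) = 10 + 2 * (Suc j - 2)" by (rule pc)
  finally have st: "V (2 * (31 - j) + K) (10 + 2 * (j - 2), m) = V (2 * (31 - Suc j) + K) (10 + 2 * (Suc j - 2), m2)" .
  have inv: "save_inv B (Suc j) M m2"
  proof -
    have m0: "nat \<lfloor>m 0\<rfloor> = B + j" using Suc.prems unfolding save_inv_def by simp
    show ?thesis using Suc.prems assms j unfolding save_inv_def m2_def m1_def m0
      by (auto simp: less_Suc_eq)
  qed
  obtain m' where "V (2 * (31 - Suc j) + K) (10 + 2 * (Suc j - 2), m2) = V K (68, m')" "save_inv B 31 M m'"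
  proof -
    have x: "x = 31 - Suc j" using Suc.hyps(2) by simp
    have "2 \<le> Suc j" "Suc j \<le> 31" using Suc.prems j by auto
    from Suc.hyps(1)[OF x this inv] show ?thesis using that by blast
  qed
  thus ?case using st by auto
qed

lemma boot:
  assumes "m 0 = real n" "m 1 = real q"
  shows "\<exists>m'. V (10 + K) (0, m) = V K (10, m') \<and> m' 0 = real (save_base n q + 2) \<and> m' 1 = 1
    \<and> (\<forall>x. 2 \<le> x \<longrightarrow> x \<noteq> save_base n q \<longrightarrow> m' x = m x) \<and> m' (save_base n q) = real q"
proof -
  have q0: "q \<noteq> 0" using q1 by simp
  have b: "save_base n q \<ge> 32" by (rule save_base_ge)
  define X where "X = n * q + q"
  have eB: "((X + X) + (X + X)) + ((X + X) + (X + X)) + (((X + X) + (X + X)) + ((X + X) + (X + X))) = save_base n q"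
    unfolding X_def save_base_def by (simp add: algebra_simps)
  show ?thesis
    using assms q0 b eB[unfolded X_def]
    apply (subst reach_prob_regs_heap)
    apply (simp add: symbolic_run sampler_prog_nth(2)[simplified] numeral_2_eq_2[symmetric] del: of_nat_add of_nat_mult of_nat_Suc)
    apply (intro exI conjI)
     apply (rule refl)
    apply (simp_all add: regs_heap_apply)
    done
qed

lemma copy_setup:
  assumes "m 0 = real (save_base n q + 31)" "m 1 = 1" "m (save_base n q) = real q"
  shows "\<exists>m'. V (13 + K) (68, m) = V K (81, m') \<and> m' 0 = real (save_base n q + 31) \<and> m' 1 = 1 \<and> m' 2 = real 31
     \<and> m' 3 = real (save_base n q) \<and> m' 4 = real q \<and> m' 6 = real n \<and> m' 7 = real (n*q) \<and> m' 8 = real (2*n*q+2)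
     \<and> (\<forall>a\<ge>31. m' a = m a)"
proof -
  have q0: "q \<noteq> 0" using q1 by simp
  have b: "save_base n q \<ge> 32" by (rule save_base_ge)
  define Z where "Z = q + q"
  have eZ: "real (save_base n q) / real ((Z + Z) + (Z + Z) + ((Z + Z) + (Z + Z))) = real (n + 1)"
    unfolding Z_def save_base_def using q0 by (simp add: field_simps)
  show ?thesis
    using assms q0 b eZ[unfolded Z_def]
    apply (subst reach_prob_regs_heap)
    apply (simp add: symbolic_run real_of_nat_add_diff_cancel del: of_nat_add of_nat_mult of_nat_Suc)
    apply (intro exI conjI)
     apply (rule refl)
    apply (simp_all add: regs_heap_apply)
    done
qed

definition copy_regs :: "nat \<Rightarrow> (nat \<Rightarrow> real) \<Rightarrow> bool" where
  "copy_regs j m \<longleftrightarrow> m 0 = real (save_base n q + j) \<and> m 1 = 1 \<and> m 2 = real j \<and> m 3 = real (save_base n q) \<and> m 4 = real q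
     \<and> m 6 = real n \<and> m 7 = real (n*q) \<and> m 8 = real (2*n*q+2)"

definition copy_inv :: "nat \<Rightarrow> (nat \<Rightarrow> real) \<Rightarrow> bool" where
  "copy_inv j m \<longleftrightarrow> copy_regs j m \<and> (\<forall>x. 2 \<le> x \<longrightarrow> x < j \<longrightarrow> x < 2+2*n*q \<longrightarrow> m (save_base n q + x) = input_mem n q P Q x)
     \<and> (\<forall>x. j \<le> x \<longrightarrow> x < 2+2*n*q \<longrightarrow> m x = input_mem n q P Q x)"

lemma copy_step:
  assumes "copy_regs j m" "j < 2*n*q+2" "31 \<le> j"
  shows "\<exists>m'. V (6 + K) (81, m) = V K (81, m') \<and> copy_regs (j+1) m' \<and> (\<forall>a\<ge>31. m' a = (m(save_base n q + j := m j)) a)"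
  using assms save_base_ge unfolding copy_regs_def
  apply (subst reach_prob_regs_heap)
  apply (simp add: symbolic_run del: of_nat_add of_nat_mult of_nat_Suc)
  apply (intro exI conjI)
   apply (rule refl)
  apply (simp_all add: regs_heap_apply)
  done

lemma copy_exit:
  assumes "copy_regs j m" "2*n*q+2 \<le> j"
  shows "V (Suc K) (81, m) = V K (87, m)"
proof -
  have "m 8 \<le> m 2" using assms unfolding copy_regs_def by (simp only: of_nat_le_iff)
  thus ?thesis by (simp add: reach_prob_step length_sampler_prog sampler_prog_nth)
qed

lemma copy_loop:
  "31 \<le> j \<Longrightarrow> copy_inv j m \<Longrightarrow> \<exists>m'. V (6 * (2*n*q+2 - j) + 1 + K) (81, m) = V K (87, m')
      \<and> (\<exists>j'. copy_regs j' m') \<and> (\<forall>x. 2 \<le> x \<longrightarrow> x < 2+2*n*q \<longrightarrow> m' (save_base n q + x) = input_mem n q P Q x)"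
proof (induction "2*n*q+2 - j" arbitrary: j m)
  case 0
  hence j: "2*n*q+2 \<le> j" by simp
  have "V (6 * (2*n*q+2 - j) + 1 + K) (81, m) = V K (87, m)"
    using copy_exit[of j m K] 0 j unfolding copy_inv_def by simp
  thus ?case using 0 j unfolding copy_inv_def by auto
next
  case (Suc x)
  hence j: "j < 2*n*q+2" by simp
  obtain m1 where m1: "V (6 + (6 * (2*n*q+2 - Suc j) + 1 + K)) (81, m) = V (6 * (2*n*q+2 - Suc j) + 1 + K) (81, m1)"
    "copy_regs (j+1) m1" "\<forall>a\<ge>31. m1 a = (m(save_base n q + j := m j)) a"
    using copy_step[of j m] Suc.prems j unfolding copy_inv_def by blast
  have b: "save_base n q \<ge> 32" "save_base n q \<ge> 2 + 2*n*q" by (rule save_base_ge, rule save_base_gt)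
  have inv: "copy_inv (Suc j) m1"
    unfolding copy_inv_def
  proof (intro conjI allI impI)
    show "copy_regs (Suc j) m1" using m1(2) by simp
  next
    fix y assume y: "2 \<le> y" "y < Suc j" "y < 2+2*n*q"
    have "m1 (save_base n q + y) = (m(save_base n q + j := m j)) (save_base n q + y)" using m1(3) b by simp
    thus "m1 (save_base n q + y) = input_mem n q P Q y"
      using Suc.prems y unfolding copy_inv_def by (cases "y = j") auto
  next
    fix y assume y: "Suc j \<le> y" "y < 2+2*n*q"
    have "m1 y = (m(save_base n q + j := m j)) y" using m1(3) Suc.prems(1) y by simp
    thus "m1 y = input_mem n q P Q y" using Suc.prems y b unfolding copy_inv_def by auto
  qed
  obtain m' where m': "V (6 * (2*n*q+2 - Suc j) + 1 + K) (81, m1) = V K (87, m')"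
      "(\<exists>j'. copy_regs j' m') \<and> (\<forall>x. 2 \<le> x \<longrightarrow> x < 2+2*n*q \<longrightarrow> m' (save_base n q + x) = input_mem n q P Q x)"
  proof -
    have x: "x = 2*n*q+2 - Suc j" using Suc.hyps(2) by simp
    have "31 \<le> Suc j" using Suc.prems by simp
    from Suc.hyps(1)[OF x this inv] show ?thesis using that by blast
  qed
  have e: "6 * (2*n*q+2 - j) + 1 + K = 6 + (6 * (2*n*q+2 - Suc j) + 1 + K)" using j by simp
  show ?case using m'(2) unfolding e m1(1) m'(1) by blast
qed

lemma table_setup:
  assumes "copy_regs j m"
  shows "\<exists>m'. V (9 + K) (87, m) = V K (96, m') \<and> const_regs m' \<and> m' 12 = real n \<and> m' 27 = real (marg_base n q + n*q)
     \<and> m' 28 = real (agree_base n q + n) \<and> (\<forall>a\<ge>31. m' a = (m(agree_base n q + n := 1)) a)"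
proof -
  have b: "save_base n q \<ge> 32" by (rule save_base_ge)
  show ?thesis
    using assms b unfolding copy_regs_def
    apply (subst reach_prob_regs_heap)
    apply (simp add: symbolic_run del: of_nat_add of_nat_mult of_nat_Suc)
    apply (intro exI conjI)
     apply (rule refl)
    apply (simp_all add: regs_heap_apply const_regs_def marg_base_def agree_base_def out_base_def reg_upd_def)
    done
qed

lemma copy_correct:
  "\<exists>m j. V (10 + 2 * (31 - 2) + 13 + (6 * (2 * n * q + 2 - 31) + 1) + K) (0, input_mem n q P Q)
      = V K (87, m) \<and> copy_regs j m
      \<and> (\<forall>x. 2 \<le> x \<longrightarrow> x < 2 + 2 * n * q \<longrightarrow> m (save_base n q + x) = input_mem n q P Q x)"
proof -
  define M where "M = input_mem n q P Q"
  define B where "B = save_base n q"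
  have b: "B \<ge> 32" "B \<ge> 2 + 2 * n * q" unfolding B_def by (rule save_base_ge, rule save_base_gt)
  define K3 where "K3 = 6 * (2 * n * q + 2 - 31) + 1 + K"
  have M01: "M 0 = real n" "M 1 = real q" unfolding M_def input_mem_def by auto
  obtain m1 where m1: "V (10 + (2 * (31 - 2) + (13 + K3))) (0, M) = V (2 * (31 - 2) + (13 + K3)) (10, m1)"
    "m1 0 = real (B + 2)" "m1 1 = 1" "\<forall>x. 2 \<le> x \<longrightarrow> x \<noteq> B \<longrightarrow> m1 x = M x" "m1 B = real q"
    using boot[OF M01] unfolding B_def by blast
  have "save_inv B 2 M m1" unfolding save_inv_def using m1 b by auto
  then obtain m2 where m2: "V (2 * (31 - 2) + (13 + K3)) (10 + 2 * (2 - 2), m1) = V (13 + K3) (68, m2)"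
    "save_inv B 31 M m2"
    using save_loop[OF b(1), of 2 M m1 "13 + K3"] by auto
  have m2f: "m2 0 = real (save_base n q + 31)" "m2 1 = 1" "m2 (save_base n q) = real q"
    using m2(2) unfolding save_inv_def B_def by auto
  obtain m3 where m3: "V (13 + K3) (68, m2) = V K3 (81, m3)" "m3 0 = real (save_base n q + 31)"
     "m3 1 = 1" "m3 2 = real 31" "m3 3 = real (save_base n q)" "m3 4 = real q" "m3 6 = real n"
     "m3 7 = real (n * q)" "m3 8 = real (2 * n * q + 2)" "\<forall>a\<ge>31. m3 a = m2 a"
    using copy_setup[OF m2f] by blast
  have "copy_inv 31 m3"
    unfolding copy_inv_def copy_regs_def
  proof (intro conjI allI impI)
    fix x assume "2 \<le> x" "x < 31" "x < 2 + 2 * n * q"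
    then show "m3 (save_base n q + x) = input_mem n q P Q x"
      using m3(10) b m2(2) unfolding save_inv_def M_def B_def by auto
  next
    fix x assume "31 \<le> x" "x < 2 + 2 * n * q"
    then show "m3 x = input_mem n q P Q x"
      using m3(10) m2(2) b unfolding save_inv_def M_def by auto
  qed (use m3 in auto)
  then obtain m4 j where "V K3 (81, m3) = V K (87, m4)" "copy_regs j m4"
     "\<forall>x. 2 \<le> x \<longrightarrow> x < 2 + 2 * n * q \<longrightarrow> m4 (save_base n q + x) = input_mem n q P Q x"
    using copy_loop[of 31 m3 K] unfolding K3_def by auto
  moreover have "V (10 + 2 * (31 - 2) + 13 + (6 * (2 * n * q + 2 - 31) + 1) + K) (0, input_mem n q P Q)
      = V K3 (81, m3)"
    using m1(1) m2(1) m3(1) unfolding M_def K3_def by (simp add: add.assoc)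
  ultimately show ?thesis by auto
qed

lemma table_init:
  assumes "copy_regs j m"
    and saved: "\<forall>x. 2 \<le> x \<longrightarrow> x < 2 + 2 * n * q \<longrightarrow> m (save_base n q + x) = input_mem n q P Q x"
  shows "\<exists>m'. V (9 + K) (87, m) = V K (96, m') \<and> table_inv n m'"
proof -
  obtain m' where m': "V (9 + K) (87, m) = V K (96, m')" "const_regs m'" "m' 12 = real n"
    "m' 27 = real (marg_base n q + n * q)" "m' 28 = real (agree_base n q + n)"
    "\<forall>a\<ge>31. m' a = (m(agree_base n q + n := 1)) a"
    using table_setup[OF assms(1)] by blast
  have "marg_stored i m'" if i: "i < n" for i
    unfolding marg_stored_def
  proof (intro allI impI conjI)
    fix c assume c: "c < q"
    have l: "marg_base n q + i * q + c < agree_base n q" "marg_base n q + i * q + n * q + c < agree_base n q"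
      using marg_addr_lt[OF i c] by auto
    have r: "2 + i * q + c < 2 + 2 * n * q" "2 + n * q + i * q + c < 2 + 2 * n * q"
      using mult_add_lt_mult[OF i c] by auto
    have "m' (marg_base n q + i * q + c) = m (save_base n q + (2 + i * q + c))"
      using m'(6) l marg_base_ge unfolding marg_base_def by (simp add: add.assoc)
    also have "\<dots> = P i c"
      using saved[rule_format, OF _ r(1)] input_mem_P[OF i c] by simp
    finally show "m' (marg_base n q + i * q + c) = P i c" .
    have "m' (marg_base n q + i * q + n * q + c) = m (save_base n q + (2 + n * q + i * q + c))"
      using m'(6) l marg_base_ge unfolding marg_base_def by (simp add: algebra_simps)
    also have "\<dots> = Q i c"
      using saved[rule_format, OF _ r(2)] input_mem_Q[OF i c] by simp
    finally show "m' (marg_base n q + i * q + n * q + c) = Q i c" .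
  qed
  moreover have "m' (agree_base n q + n) = agree_prob n"
    using m'(6) agree_base_ge agree_prob_n by simp
  ultimately have "table_inv n m'"
    unfolding table_inv_def using m' by (auto simp: le_antisym)
  then show ?thesis using m'(1) by blast
qed

definition run_time :: nat where
  "run_time = 10 + 2 * (31 - 2) + 13 + (6 * (2 * n * q + 2 - 31) + 1) + 9
     + n * (11 * q + 14) + 7 + sample_time 0"

lemma run_correct:
  assumes "agree_prob 0 < 1"
  shows "V (run_time + k) (0, input_mem n q P Q) = success_prob 0 1 (\<lambda>_. 0)"
proof -
  define K where "K = n * (11 * q + 14) + 7 + sample_time 0 + k"
  have time: "run_time + k = 10 + 2 * (31 - 2) + 13 + (6 * (2 * n * q + 2 - 31) + 1) + (9 + K)"
    unfolding run_time_def K_def by simp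
  obtain m j where copied: "V (10 + 2 * (31 - 2) + 13 + (6 * (2 * n * q + 2 - 31) + 1) + (9 + K)) (0, input_mem n q P Q)
      = V (9 + K) (87, m)" "copy_regs j m"
    "\<forall>x. 2 \<le> x \<longrightarrow> x < 2 + 2 * n * q \<longrightarrow> m (save_base n q + x) = input_mem n q P Q x"
    using copy_correct by blast
  obtain m' where table: "V (9 + K) (87, m) = V K (96, m')" "table_inv n m'"
    using table_init[OF copied(2,3)] by blast
  have "V (run_time + k) (0, input_mem n q P Q) = V K (96, m')"
    unfolding time copied(1) table(1) ..
  also have "\<dots> = success_prob 0 1 (\<lambda>_. 0)"
    unfolding K_def by (rule table_loop[OF assms order_refl table(2)])
  finally show ?thesis .
qed

lemma run_time_le: "run_time \<le> 400 * q * n"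
proof -
  have nq: "1 \<le> n * q" "n \<le> n * q" using n1 q1 by simp_all
  have "run_time \<le> 221 + 43 * n + 52 * (n * q)"
    unfolding run_time_def sample_time_def by (simp add: algebra_simps)
  then have "run_time \<le> 400 * (n * q)" using nq by linarith
  then show ?thesis by (simp add: mult.commute mult.left_commute)
qed

end

theorem lemma3p1:
  "\<exists>(prog :: instr list) (C :: nat).
     \<forall>n q P Q Cpl.
       1 \<le> n \<longrightarrow> 1 \<le> q \<longrightarrow>
       is_product_dist n q P \<longrightarrow> is_product_dist n q Q \<longrightarrow>
       (\<exists>w\<in>cube n q. prod_mass n P w \<noteq> prod_mass n Q w) \<longrightarrow>
       is_greedy_coupling n q P Q Cpl \<longrightarrow>
       (\<forall>w\<in>cube n q.
          measure_pmf.prob (exec prog (C * q * n) (0, input_mem n q P Q)) (outputs prog n w)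
            = pi_cond n q Cpl w)"
proof (intro exI[of _ sampler_prog] exI[of _ 400] allI impI ballI)
  fix n q P Q Cpl w
  assume "1 \<le> n" "1 \<le> q" "is_product_dist n q P" "is_product_dist n q Q"
    and ne: "\<exists>w\<in>cube n q. prod_mass n P w \<noteq> prod_mass n Q w" and g: "is_greedy_coupling n q P Q Cpl"
    and "w \<in> cube n q"
  then interpret sampler n q P Q w by unfold_locales
  have "V (run_time + (400 * q * n - run_time)) (0, input_mem n q P Q) = pi_cond n q Cpl w"
    using run_correct[OF agree_prob_0_less[OF ne]] success_prob_eq_pi_cond[OF g] by simp
  then show "measure_pmf.prob (exec sampler_prog (400 * q * n) (0, input_mem n q P Q)) (outputs sampler_prog n w)
      = pi_cond n q Cpl w"
    using run_time_le by (simp add: reach_prob_def)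
qed

end
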